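(* Let $X$ be the space of all sequences of the form $c=\sum_{k=1}^N a_k\star b_k$ (finite sums) with $a_k,b_k$ finitely supported, normed by $\|c\|_X=\inf\sum_{k=1}^N\|a_k\|_{\ell^2}\|b_k\|_{\ell^2}$ over all such finite representations, and let $\mathcal{X}$ be its Banach space completion. Let $\mathcal{Y}$ be the space of sequences $c=\sum_{k=1}^\infty a_k\star b_k$ with $a_k,b_k\in\ell^2(\mathbb{N})$, $\sum_k\|a_k\|_{\ell^2}\|b_k\|_{\ell^2}<\infty$, normed by $\|c\|_{\mathcal{Y}}=\inf\sum_{k=1}^\infty\|a_k\|_{\ell^2}\|b_k\|_{\ell^2}$ over all such representations. Then the inclusion map $V\colon X\to\mathcal{Y}$ extends to an isometric isomorphism $V\colon\mathcal{X}\to\mathcal{Y}$.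
   Context: Dirichlet convolution: $(a\star b)(n)=\sum_{k\mid n}a(k)\overline{b(n/k)}$ for sequences $a,b\colon\mathbb{N}\to\mathbb{C}$; series in the definition of $\mathcal{Y}$ converge coordinatewise. *)

theory Defs
  imports "HOL-Analysis.Analysis"
begin

text \<open>Sequences on the positive integers are modelled as functions nat => complex;
  index 0 is not part of the index set and the sequences considered vanish there.\<close>

definition dconv :: "(nat \<Rightarrow> complex) \<Rightarrow> (nat \<Rightarrow> complex) \<Rightarrow> nat \<Rightarrow> complex" where
  "dconv a b n = (if n = 0 then 0 else (\<Sum>k | k dvd n. a k * cnj (b (n div k))))"

definition fin_supp :: "(nat \<Rightarrow> complex) \<Rightarrow> bool" where
  "fin_supp a \<longleftrightarrow> a 0 = 0 \<and> finite {n. a n \<noteq> 0}"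

definition in_l2 :: "(nat \<Rightarrow> complex) \<Rightarrow> bool" where
  "in_l2 a \<longleftrightarrow> a 0 = 0 \<and> summable (\<lambda>n. (cmod (a n))\<^sup>2)"

definition l2norm :: "(nat \<Rightarrow> complex) \<Rightarrow> real" where
  "l2norm a = sqrt (\<Sum>n. (cmod (a n))\<^sup>2)"

definition X_rep :: "(nat \<Rightarrow> complex) \<Rightarrow> nat \<Rightarrow> (nat \<Rightarrow> nat \<Rightarrow> complex)
    \<Rightarrow> (nat \<Rightarrow> nat \<Rightarrow> complex) \<Rightarrow> bool" where
  "X_rep c N a b \<longleftrightarrow> (\<forall>k<N. fin_supp (a k) \<and> fin_supp (b k))
      \<and> c = (\<lambda>n. \<Sum>k<N. dconv (a k) (b k) n)"

definition Xspace :: "(nat \<Rightarrow> complex) set" where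
  "Xspace = {c. \<exists>N a b. X_rep c N a b}"

definition Xnorm :: "(nat \<Rightarrow> complex) \<Rightarrow> real" where
  "Xnorm c = Inf {\<Sum>k<N. l2norm (a k) * l2norm (b k) | N a b. X_rep c N a b}"

definition Y_rep :: "(nat \<Rightarrow> complex) \<Rightarrow> (nat \<Rightarrow> nat \<Rightarrow> complex)
    \<Rightarrow> (nat \<Rightarrow> nat \<Rightarrow> complex) \<Rightarrow> bool" where
  "Y_rep c a b \<longleftrightarrow> (\<forall>k. in_l2 (a k) \<and> in_l2 (b k))
      \<and> summable (\<lambda>k. l2norm (a k) * l2norm (b k))
      \<and> (\<forall>n. (\<lambda>k. dconv (a k) (b k) n) sums c n)"

definition Yspace :: "(nat \<Rightarrow> complex) set" where
  "Yspace = {c. \<exists>a b. Y_rep c a b}"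

definition Ynorm :: "(nat \<Rightarrow> complex) \<Rightarrow> real" where
  "Ynorm c = Inf {(\<Sum>k. l2norm (a k) * l2norm (b k)) | a b. Y_rep c a b}"

end

theory Submission
  imports Defs "HOL-Computational_Algebra.Primes"
begin

text \<open>
  On \<open>X\<close> the two norms agree. Trivially \<open>\<parallel>c\<parallel>\<^sub>\<Y> \<le> \<parallel>c\<parallel>\<^sub>X\<close>. Conversely, let
  \<open>c = \<Sum>\<^sub>k a\<^sub>k \<star> b\<^sub>k\<close> be finitely supported and multiply it by the completely
  multiplicative weight \<open>w(n) = r\<^bsup>\<Omega>(n)\<^esup>\<close> on \<open>S\<close>-smooth numbers (zero elsewhere;
  \<open>\<Omega>\<close> counts prime factors with multiplicity). Then \<open>w c = \<Sum>\<^sub>k (w a\<^sub>k) \<star> (w b\<^sub>k)\<close>, and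
  since \<open>w \<in> \<ell>\<^sup>2\<close> this series converges in \<open>\<ell>\<^sup>1\<close>, because \<open>\<parallel>u \<star> v\<parallel>\<^sub>1 \<le> \<parallel>u\<parallel>\<^sub>1 \<parallel>v\<parallel>\<^sub>1\<close>
  and \<open>\<parallel>w a\<parallel>\<^sub>1 \<le> \<parallel>w\<parallel>\<^sub>2 \<parallel>a\<parallel>\<^sub>2\<close>. As \<open>\<ell>\<^sup>1\<close> dominates \<open>\<parallel>\<cdot>\<parallel>\<^sub>X\<close> on finitely supported
  sequences, finite truncations give \<open>\<parallel>w c\<parallel>\<^sub>X \<le> \<Sum>\<^sub>k \<parallel>a\<^sub>k\<parallel> \<parallel>b\<^sub>k\<parallel>\<close>, and
  \<open>w c \<rightarrow> c\<close> as \<open>r \<rightarrow> 1\<close>.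

  Coordinates are bounded by the \<open>\<Y>\<close>-norm, so a point of the completion determines the
  coordinatewise limit of any approximating sequence from \<open>X\<close>; this limit is \<open>V\<close>. Countable
  subadditivity of \<open>\<parallel>\<cdot>\<parallel>\<^sub>\<Y>\<close> along a fast Cauchy sequence shows that \<open>V\<close> lands in \<open>\<Y>\<close>
  isometrically, and density of \<open>X\<close> in \<open>\<Y>\<close> (truncate the series and the sequences)
  gives surjectivity.
\<close>

lemma l2norm_nonneg: "in_l2 a \<Longrightarrow> 0 \<le> l2norm a"
  unfolding l2norm_def in_l2_def by (auto intro!: suminf_nonneg)

lemma L2_set_le_l2norm:
  assumes "in_l2 a" shows "L2_set (\<lambda>n. cmod (a n)) A \<le> l2norm a"
proof (cases "finite A")
  case True thus ?thesis using assms unfolding L2_set_def l2norm_def in_l2_def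
    by (intro real_sqrt_le_mono sum_le_suminf) auto
qed (simp add: l2norm_nonneg assms)

lemma in_l2_dominated:
  assumes "in_l2 b" "a 0 = 0" "\<And>n. cmod (a n) \<le> cmod (b n)"
  shows "in_l2 a" "l2norm a \<le> l2norm b"
proof -
  have le: "\<And>n. (cmod (a n))\<^sup>2 \<le> (cmod (b n))\<^sup>2"
    using assms(3) by (simp add: power_mono)
  have s: "summable (\<lambda>n. (cmod (a n))\<^sup>2)"
    by (rule summable_comparison_test[of _ "\<lambda>n. (cmod (b n))\<^sup>2"]) (use assms le in \<open>auto simp: in_l2_def\<close>)
  thus "in_l2 a" using assms by (simp add: in_l2_def)
  show "l2norm a \<le> l2norm b" unfolding l2norm_def
    using assms s le by (auto intro!: suminf_le simp: in_l2_def)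
qed

lemma fin_supp_imp_in_l2: "fin_supp a \<Longrightarrow> in_l2 a"
  unfolding fin_supp_def in_l2_def by (auto intro: summable_finite[of "{n. a n \<noteq> 0}"])

lemma in_l2_zero: "in_l2 (\<lambda>_. 0)" and l2norm_zero: "l2norm (\<lambda>_. 0) = 0"
  by (simp_all add: in_l2_def l2norm_def)

lemma l2norm_indicator: "l2norm (\<lambda>i. if i = k then z else 0) = cmod z"
proof -
  have "(\<Sum>n. (cmod (if n = k then z else 0))\<^sup>2) = (\<Sum>n\<in>{k}. (cmod (if n = k then z else 0))\<^sup>2)"
    by (rule suminf_finite) auto
  thus ?thesis by (simp add: l2norm_def)
qed

lemma in_l2_scale:
  assumes "in_l2 a"
  shows "in_l2 (\<lambda>i. z * a i)" "l2norm (\<lambda>i. z * a i) = cmod z * l2norm a"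
proof -
  have e: "(\<lambda>n. (cmod (z * a n))\<^sup>2) = (\<lambda>n. (cmod z)\<^sup>2 * (cmod (a n))\<^sup>2)"
    by (simp add: norm_mult power_mult_distrib)
  show "in_l2 (\<lambda>i. z * a i)" using assms unfolding in_l2_def e by (auto intro: summable_mult)
  have "(\<Sum>n. (cmod (z * a n))\<^sup>2) = (cmod z)\<^sup>2 * (\<Sum>n. (cmod (a n))\<^sup>2)"
    unfolding e using assms by (intro suminf_mult) (simp add: in_l2_def)
  thus "l2norm (\<lambda>i. z * a i) = cmod z * l2norm a"
    by (simp add: l2norm_def real_sqrt_mult)
qed

lemma dconv_add_left: "dconv (\<lambda>i. a i + a' i) b n = dconv a b n + dconv a' b n"
  by (simp add: dconv_def distrib_right sum.distrib)

lemma dconv_add_right: "dconv a (\<lambda>i. b i + b' i) n = dconv a b n + dconv a b' n"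
  by (simp add: dconv_def distrib_left sum.distrib)

lemma dconv_scale_left: "dconv (\<lambda>i. z * a i) b n = z * dconv a b n"
  by (simp add: dconv_def sum_distrib_left mult.assoc)

lemma dconv_zero_left: "dconv (\<lambda>_. 0) b = (\<lambda>_. 0)"
  by (simp add: dconv_def fun_eq_iff)

lemma norm_dconv_le: "cmod (dconv a b n) \<le> (\<Sum>k | k dvd n. cmod (a k) * cmod (b (n div k)))"
  unfolding dconv_def by (auto intro!: order.trans[OF norm_sum] simp: norm_mult sum_nonneg)

lemma inj_on_div_divisors:
  assumes "0 < (n::nat)" shows "inj_on (\<lambda>k. n div k) {k. k dvd n}"
proof (rule inj_onI)
  fix x y assume "x \<in> {k. k dvd n}" "y \<in> {k. k dvd n}" and eq: "n div x = n div y"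
  then obtain u v where u: "n = x * u" and v: "n = y * v" by (meson dvdE mem_Collect_eq)
  have "x \<noteq> 0" "u \<noteq> 0" using assms u by auto
  hence "n div x = u" by (simp add: u)
  moreover have "y \<noteq> 0" using assms v by auto
  hence "n div y = v" by (simp add: v)
  ultimately have "u = v" using eq by simp
  thus "x = y" using u v \<open>u \<noteq> 0\<close> by simp
qed

lemma norm_dconv_le_l2norm:
  assumes "in_l2 a" "in_l2 b"
  shows "cmod (dconv a b n) \<le> l2norm a * l2norm b"
proof (cases "n = 0")
  case True thus ?thesis using assms by (simp add: dconv_def l2norm_nonneg)
next
  case False
  let ?D = "{k. k dvd n}"
  have "cmod (dconv a b n) \<le> (\<Sum>k\<in>?D. cmod (a k) * cmod (b (n div k)))"
    by (rule norm_dconv_le)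
  also have "\<dots> \<le> L2_set (\<lambda>k. cmod (a k)) ?D * L2_set (\<lambda>k. cmod (b (n div k))) ?D"
    using L2_set_mult_ineq[of "\<lambda>k. cmod (a k)" "\<lambda>k. cmod (b (n div k))" ?D] by simp
  also have "L2_set (\<lambda>k. cmod (b (n div k))) ?D = L2_set (\<lambda>k. cmod (b k)) ((\<lambda>k. n div k) ` ?D)"
    using False by (simp add: L2_set_def sum.reindex inj_on_div_divisors)
  also have "L2_set (\<lambda>k. cmod (a k)) ?D * \<dots> \<le> l2norm a * l2norm b"
    by (intro mult_mono L2_set_le_l2norm assms l2norm_nonneg) auto
  finally show ?thesis .
qed

lemma sums_prod_decode:
  fixes f :: "nat \<times> nat \<Rightarrow> 'a::banach"
  assumes f_le: "\<And>p. norm (f p) \<le> g p"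
    and g_rows: "\<And>m. (\<lambda>k. g (m, k)) sums s m" and s: "summable s"
    and f_rows: "\<And>m. (\<lambda>k. f (m, k)) sums r m"
  shows "(\<lambda>i. f (prod_decode i)) sums (\<Sum>m. r m)"
proof -
  have g_nonneg: "0 \<le> g p" for p using f_le[of p] norm_ge_zero order.trans by blast
  have s_nonneg: "0 \<le> s m" for m using g_rows[of m] g_nonneg by (metis sums_iff suminf_nonneg)
  have g_abs_rows: "(\<lambda>k. norm (g (m, k))) summable_on UNIV" for m
    using g_rows[of m] g_nonneg by (auto intro: sums_nonneg_imp_has_sum has_sum_imp_summable)
  have "infsum (\<lambda>k. norm (g (m, k))) UNIV = s m" for m
    using g_rows g_nonneg by (auto intro!: infsumI sums_nonneg_imp_has_sum)
  moreover have "s summable_on UNIV"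
    using s s_nonneg by (auto intro: sums_nonneg_imp_has_sum has_sum_imp_summable summable_sums)
  ultimately have g_abs: "(\<lambda>p. norm (g p)) summable_on (Sigma UNIV (\<lambda>_. UNIV))"
    using g_abs_rows s_nonneg by (intro Infinite_Sum.abs_summable_on_Sigma_iff[THEN iffD2]) simp
  have f_summable: "f summable_on (Sigma UNIV (\<lambda>_. UNIV))"
    by (rule Infinite_Sum.abs_summable_summable, rule Infinite_Sum.abs_summable_on_comparison_test[OF g_abs])
      (use f_le g_nonneg in auto)
  have f_row_norms: "summable (\<lambda>k. norm (f (m, k)))" for m
    by (rule summable_comparison_test[OF _ sums_summable[OF g_rows[of m]]]) (use f_le in auto)
  have r_le: "norm (r m) \<le> s m" for m
  proof -
    have "norm (r m) \<le> (\<Sum>k. norm (f (m, k)))"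
      using f_rows[of m] summable_norm[OF f_row_norms[of m]] sums_unique by metis
    also have "\<dots> \<le> (\<Sum>k. g (m, k))"
      by (rule suminf_le[OF f_le f_row_norms sums_summable[OF g_rows]])
    also have "\<dots> = s m" using g_rows[of m] sums_unique by metis
    finally show ?thesis .
  qed
  have r_norms: "summable (\<lambda>m. norm (r m))"
    by (rule summable_comparison_test[OF _ s]) (use r_le in auto)
  have "(r has_sum (\<Sum>m. r m)) UNIV"
    by (rule norm_summable_imp_has_sum[OF r_norms summable_sums[OF summable_norm_cancel[OF r_norms]]])
  moreover have "((\<lambda>k. f (m, k)) has_sum r m) UNIV" for m
    using f_row_norms f_rows by (rule norm_summable_imp_has_sum)
  ultimately have "(f has_sum (\<Sum>m. r m)) (Sigma UNIV (\<lambda>_. UNIV))"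
    using f_summable by (intro has_sum_SigmaI)
  moreover have "bij_betw prod_decode UNIV (Sigma UNIV (\<lambda>_. UNIV))"
    using bij_prod_decode by simp
  ultimately have "((\<lambda>i. f (prod_decode i)) has_sum (\<Sum>m. r m)) UNIV"
    by (simp add: has_sum_reindex_bij_betw)
  thus ?thesis by (rule has_sum_imp_sums)
qed

abbreviation cost :: "(nat \<Rightarrow> nat \<Rightarrow> complex) \<Rightarrow> (nat \<Rightarrow> nat \<Rightarrow> complex) \<Rightarrow> nat \<Rightarrow> real" where
  "cost a b k \<equiv> l2norm (a k) * l2norm (b k)"

lemma Y_rep_cost_nonneg: "Y_rep c a b \<Longrightarrow> 0 \<le> cost a b k"
  by (auto simp: Y_rep_def intro!: mult_nonneg_nonneg l2norm_nonneg)

lemma Y_rep_suminf_cost_nonneg: "Y_rep c a b \<Longrightarrow> 0 \<le> (\<Sum>k. cost a b k)"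
  using Y_rep_cost_nonneg by (auto intro!: suminf_nonneg simp: Y_rep_def)

lemma Ynorm_le_Y_rep: "Y_rep c a b \<Longrightarrow> Ynorm c \<le> (\<Sum>k. cost a b k)"
  unfolding Ynorm_def
  by (rule cInf_lower) (auto intro: bdd_belowI[of _ 0] Y_rep_suminf_cost_nonneg)

lemma Ynorm_nonneg: "c \<in> Yspace \<Longrightarrow> 0 \<le> Ynorm c"
  unfolding Ynorm_def Yspace_def by (rule cInf_greatest) (auto intro: Y_rep_suminf_cost_nonneg)

lemma Ynorm_approx:
  assumes "c \<in> Yspace" "e > 0"
  obtains a b where "Y_rep c a b" "(\<Sum>k. cost a b k) < Ynorm c + e"
proof -
  have "{(\<Sum>k. cost a b k) | a b. Y_rep c a b} \<noteq> {}"
    using assms by (auto simp: Yspace_def)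
  from cInf_lessD[OF this, of "Ynorm c + e"] assms that show ?thesis
    by (auto simp: Ynorm_def)
qed

lemma Ynorm_greatest:
  assumes "c \<in> Yspace" "\<And>a b. Y_rep c a b \<Longrightarrow> x \<le> (\<Sum>k. cost a b k)"
  shows "x \<le> Ynorm c"
  unfolding Ynorm_def using assms by (intro cInf_greatest) (auto simp: Yspace_def)

lemma norm_le_Y_rep:
  assumes "Y_rep c a b"
  shows "cmod (c n) \<le> (\<Sum>k. cost a b k)"
proof -
  have l2: "\<And>k. in_l2 (a k) \<and> in_l2 (b k)" and s: "summable (cost a b)"
    and sm: "(\<lambda>k. dconv (a k) (b k) n) sums c n"
    using assms by (auto simp: Y_rep_def)
  have le: "\<And>k. norm (dconv (a k) (b k) n) \<le> cost a b k"
    using l2 norm_dconv_le_l2norm by blast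
  have ns: "summable (\<lambda>k. norm (dconv (a k) (b k) n))"
    by (rule summable_comparison_test[OF _ s]) (use le in auto)
  have "cmod (c n) \<le> (\<Sum>k. norm (dconv (a k) (b k) n))"
    using summable_norm[OF ns] sm sums_unique by metis
  also have "\<dots> \<le> (\<Sum>k. cost a b k)" by (rule suminf_le[OF le ns s])
  finally show ?thesis .
qed

lemma norm_le_Ynorm: "c \<in> Yspace \<Longrightarrow> cmod (c n) \<le> Ynorm c"
  by (rule Ynorm_greatest) (auto intro: norm_le_Y_rep)

lemma Ynorm_approx_seq:
  assumes "\<And>m. d m \<in> Yspace" "\<And>m. e m > 0"
  obtains a b where "\<And>m. Y_rep (d m) (a m) (b m)" "\<And>m. (\<Sum>k. cost (a m) (b m) k) < Ynorm (d m) + e m"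
proof -
  have "\<forall>m. \<exists>ab. Y_rep (d m) (fst ab) (snd ab) \<and> (\<Sum>k. cost (fst ab) (snd ab) k) < Ynorm (d m) + e m"
  proof
    fix m
    obtain a b where "Y_rep (d m) a b" "(\<Sum>k. cost a b k) < Ynorm (d m) + e m"
      using Ynorm_approx[OF assms] by blast
    thus "\<exists>ab. Y_rep (d m) (fst ab) (snd ab) \<and> (\<Sum>k. cost (fst ab) (snd ab) k) < Ynorm (d m) + e m"
      by (intro exI[of _ "(a, b)"]) simp
  qed
  from choice[OF this] obtain ab where "\<forall>m. Y_rep (d m) (fst (ab m)) (snd (ab m))
      \<and> (\<Sum>k. cost (fst (ab m)) (snd (ab m)) k) < Ynorm (d m) + e m" ..
  thus ?thesis by (intro that[of "\<lambda>m. fst (ab m)" "\<lambda>m. snd (ab m)"]) simp_all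
qed

lemma Y_rep_suminf:
  fixes a b :: "nat \<Rightarrow> nat \<Rightarrow> nat \<Rightarrow> complex"
  assumes reps: "\<And>m. Y_rep (d m) (a m) (b m)"
    and costs: "summable (\<lambda>m. \<Sum>k. cost (a m) (b m) k)"
  defines "A \<equiv> \<lambda>i. a (fst (prod_decode i)) (snd (prod_decode i))"
    and "B \<equiv> \<lambda>i. b (fst (prod_decode i)) (snd (prod_decode i))"
  shows "Y_rep (\<lambda>n. \<Sum>m. d m n) A B"
    and "(\<Sum>i. cost A B i) = (\<Sum>m. \<Sum>k. cost (a m) (b m) k)"
proof -
  define g where "g = (\<lambda>p. cost (a (fst p)) (b (fst p)) (snd p))"
  have g_nonneg: "norm (g p) \<le> g p" for p
    unfolding g_def using Y_rep_cost_nonneg[OF reps] by simp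
  have g_rows: "(\<lambda>k. g (m, k)) sums (\<Sum>k. cost (a m) (b m) k)" for m
    using reps[of m] by (simp add: g_def Y_rep_def summable_sums)
  have costs_AB: "cost A B sums (\<Sum>m. \<Sum>k. cost (a m) (b m) k)"
    using sums_prod_decode[OF g_nonneg g_rows costs g_rows] by (simp add: g_def A_def B_def)
  thus "(\<Sum>i. cost A B i) = (\<Sum>m. \<Sum>k. cost (a m) (b m) k)"
    by (simp add: sums_iff)
  have "(\<lambda>i. dconv (A i) (B i) n) sums (\<Sum>m. d m n)" for n
  proof -
    define f where "f = (\<lambda>p. dconv (a (fst p) (snd p)) (b (fst p) (snd p)) n)"
    have f_le: "norm (f p) \<le> g p" for p
      unfolding f_def g_def using reps by (auto intro!: norm_dconv_le_l2norm simp: Y_rep_def)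
    have f_rows: "(\<lambda>k. f (m, k)) sums d m n" for m
      using reps[of m] by (simp add: f_def Y_rep_def)
    have "(\<lambda>i. f (prod_decode i)) sums (\<Sum>m. d m n)"
      by (rule sums_prod_decode[OF f_le g_rows costs f_rows])
    thus ?thesis by (simp add: f_def A_def B_def)
  qed
  with costs_AB show "Y_rep (\<lambda>n. \<Sum>m. d m n) A B"
    using reps by (auto simp: Y_rep_def A_def B_def sums_iff)
qed

lemma Yspace_suminf:
  assumes d: "\<And>m. d m \<in> Yspace" and summable: "summable (\<lambda>m. Ynorm (d m))"
  shows "(\<lambda>n. \<Sum>m. d m n) \<in> Yspace" and "Ynorm (\<lambda>n. \<Sum>m. d m n) \<le> (\<Sum>m. Ynorm (d m))"
proof -
  have approx: "\<exists>a b. Y_rep (\<lambda>n. \<Sum>m. d m n) a b \<and> (\<Sum>k. cost a b k) \<le> (\<Sum>m. Ynorm (d m)) + e"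
    if e: "e > 0" for e
  proof -
    define g where "g = (\<lambda>m::nat. e/2 * (1/2::real)^m)"
    have g_sums: "g sums e"
      unfolding g_def using sums_mult[OF geometric_sums[of "1/2::real"], of "e/2"] by simp
    have g_pos: "g m > 0" for m using e by (simp add: g_def)
    obtain a b where reps: "\<And>m. Y_rep (d m) (a m) (b m)"
      and lt: "\<And>m. (\<Sum>k. cost (a m) (b m) k) < Ynorm (d m) + g m"
      by (rule Ynorm_approx_seq[of d g, OF d g_pos]) blast
    have le: "(\<Sum>k. cost (a m) (b m) k) \<le> Ynorm (d m) + g m" for m
      using lt[of m] by simp
    have bound_summable: "summable (\<lambda>m. Ynorm (d m) + g m)"
      using summable g_sums by (intro summable_add) (auto simp: sums_iff)
    have costs: "summable (\<lambda>m. \<Sum>k. cost (a m) (b m) k)"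
      by (rule summable_comparison_test[OF _ bound_summable])
        (use le Y_rep_suminf_cost_nonneg[OF reps] in auto)
    have "(\<Sum>m. \<Sum>k. cost (a m) (b m) k) \<le> (\<Sum>m. Ynorm (d m) + g m)"
      by (rule suminf_le[OF le costs bound_summable])
    also have "\<dots> = (\<Sum>m. Ynorm (d m)) + e"
      using suminf_add[OF summable sums_summable[OF g_sums]] g_sums by (simp add: sums_iff)
    finally have "(\<Sum>m. \<Sum>k. cost (a m) (b m) k) \<le> (\<Sum>m. Ynorm (d m)) + e" .
    moreover obtain A B where "Y_rep (\<lambda>n. \<Sum>m. d m n) A B"
      "(\<Sum>i. cost A B i) = (\<Sum>m. \<Sum>k. cost (a m) (b m) k)"
      using Y_rep_suminf[OF reps costs] by blast
    ultimately show ?thesis by (intro exI[of _ A] exI[of _ B]) simp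
  qed
  then obtain a b where "Y_rep (\<lambda>n. \<Sum>m. d m n) a b" using zero_less_one by blast
  thus "(\<lambda>n. \<Sum>m. d m n) \<in> Yspace" by (auto simp: Yspace_def)
  have "Ynorm (\<lambda>n. \<Sum>m. d m n) \<le> (\<Sum>m. Ynorm (d m)) + e" if "e > 0" for e
    using approx[OF that] Ynorm_le_Y_rep by (meson order.trans)
  thus "Ynorm (\<lambda>n. \<Sum>m. d m n) \<le> (\<Sum>m. Ynorm (d m))" by (rule field_le_epsilon)
qed

lemma Y_rep_finite:
  assumes "\<And>k. k < N \<Longrightarrow> in_l2 (a k) \<and> in_l2 (b k)"
  defines "A \<equiv> \<lambda>k. if k < N then a k else (\<lambda>_. 0)"
    and "B \<equiv> \<lambda>k. if k < N then b k else (\<lambda>_. 0)"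
  shows "Y_rep (\<lambda>n. \<Sum>k<N. dconv (a k) (b k) n) A B"
    and "(\<Sum>k. cost A B k) = (\<Sum>k<N. cost a b k)"
proof -
  have "in_l2 (A k) \<and> in_l2 (B k)" for k
    using assms in_l2_zero by (simp add: A_def B_def)
  moreover have costs: "cost A B sums (\<Sum>k<N. cost a b k)"
    using sums_If_finite_set[of "{..<N}" "cost a b"] by (simp add: A_def B_def if_distrib l2norm_zero cong: if_cong)
  moreover have "(\<lambda>k. dconv (A k) (B k) n) sums (\<Sum>k<N. dconv (a k) (b k) n)" for n
  proof -
    have "dconv (A k) (B k) n = (if k \<in> {..<N} then dconv (a k) (b k) n else 0)" for k
      by (simp add: A_def B_def dconv_zero_left)
    thus ?thesis using sums_If_finite_set[of "{..<N}" "\<lambda>k. dconv (a k) (b k) n"] by simp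
  qed
  ultimately show "Y_rep (\<lambda>n. \<Sum>k<N. dconv (a k) (b k) n) A B"
    by (auto simp: Y_rep_def sums_iff)
  show "(\<Sum>k. cost A B k) = (\<Sum>k<N. cost a b k)" using costs by (simp add: sums_iff)
qed

lemma dconv_in_Yspace:
  assumes "in_l2 a" "in_l2 b"
  shows "dconv a b \<in> Yspace" and "Ynorm (dconv a b) \<le> l2norm a * l2norm b"
proof -
  have "dconv a b = (\<lambda>n. \<Sum>k<(1::nat). dconv a b n)" by simp
  with Y_rep_finite[of 1 "\<lambda>_. a" "\<lambda>_. b"] assms obtain A B
    where rep: "Y_rep (dconv a b) A B" and "(\<Sum>k. cost A B k) = l2norm a * l2norm b"
    by auto
  thus "dconv a b \<in> Yspace" "Ynorm (dconv a b) \<le> l2norm a * l2norm b"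
    using Ynorm_le_Y_rep[OF rep] by (auto simp: Yspace_def)
qed

lemma Yspace_zero: "(\<lambda>_. 0) \<in> Yspace" and Ynorm_zero: "Ynorm (\<lambda>_. 0) = 0"
proof -
  have "dconv (\<lambda>_. 0) (\<lambda>_. 0) = (\<lambda>_. 0)" by (rule dconv_zero_left)
  with dconv_in_Yspace[OF in_l2_zero in_l2_zero]
  have zero: "(\<lambda>_. 0) \<in> Yspace" and "Ynorm (\<lambda>_. 0) \<le> 0" by (simp_all add: l2norm_zero)
  thus "(\<lambda>_. 0) \<in> Yspace" "Ynorm (\<lambda>_. 0) = 0" using Ynorm_nonneg[OF zero] by simp_all
qed

lemma
  assumes "c \<in> Yspace" "d \<in> Yspace"
  shows Yspace_add: "(\<lambda>n. c n + d n) \<in> Yspace"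
    and Ynorm_add_le: "Ynorm (\<lambda>n. c n + d n) \<le> Ynorm c + Ynorm d"
proof -
  define D where "D = (\<lambda>m::nat. if m = 0 then c else if m = 1 then d else (\<lambda>_. 0))"
  have two_terms: "(\<Sum>m. f m) = f 0 + f 1" if "\<And>m. m > 1 \<Longrightarrow> f m = 0"
    for f :: "nat \<Rightarrow> 'a::real_normed_vector"
  proof -
    have "(\<Sum>m. f m) = (\<Sum>m\<in>{0, 1}. f m)" by (rule suminf_finite) (use that in auto)
    thus ?thesis by simp
  qed
  have "D m \<in> Yspace" for m using assms Yspace_zero by (simp add: D_def)
  moreover have norms: "(\<lambda>m. Ynorm (D m)) sums (Ynorm c + Ynorm d)"
    using sums_finite[of "{0, 1}" "\<lambda>m. Ynorm (D m)"] by (simp add: D_def Ynorm_zero)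
  moreover have "(\<lambda>n. \<Sum>m. D m n) = (\<lambda>n. c n + d n)"
    by (simp add: two_terms D_def)
  ultimately show "(\<lambda>n. c n + d n) \<in> Yspace" "Ynorm (\<lambda>n. c n + d n) \<le> Ynorm c + Ynorm d"
    using Yspace_suminf[of D] by (auto simp: sums_iff)
qed

lemma Y_rep_scale:
  assumes "Y_rep c a b"
  shows "Y_rep (\<lambda>n. of_real r * c n) (\<lambda>k i. of_real r * a k i) b"
    and "(\<Sum>k. cost (\<lambda>k i. of_real r * a k i) b k) = \<bar>r\<bar> * (\<Sum>k. cost a b k)"
proof -
  have l2: "\<And>k. in_l2 (a k) \<and> in_l2 (b k)" and s: "summable (cost a b)"
    and sm: "\<And>n. (\<lambda>k. dconv (a k) (b k) n) sums c n" using assms by (auto simp: Y_rep_def)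
  have costs: "cost (\<lambda>k i. of_real r * a k i) b = (\<lambda>k. \<bar>r\<bar> * cost a b k)"
    using l2 in_l2_scale(2) by (auto simp: fun_eq_iff)
  show "Y_rep (\<lambda>n. of_real r * c n) (\<lambda>k i. of_real r * a k i) b"
    unfolding Y_rep_def costs
    using l2 in_l2_scale(1) s sums_mult[OF sm, of "of_real r"] by (auto simp: dconv_scale_left)
  show "(\<Sum>k. cost (\<lambda>k i. of_real r * a k i) b k) = \<bar>r\<bar> * (\<Sum>k. cost a b k)"
    unfolding costs using s by (rule suminf_mult)
qed

lemma
  assumes "c \<in> Yspace"
  shows Yspace_scale: "(\<lambda>n. of_real r * c n) \<in> Yspace"
    and Ynorm_scale_le: "Ynorm (\<lambda>n. of_real r * c n) \<le> \<bar>r\<bar> * Ynorm c"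
proof -
  obtain a b where "Y_rep c a b" using assms by (auto simp: Yspace_def)
  thus "(\<lambda>n. of_real r * c n) \<in> Yspace"
    unfolding Yspace_def by (blast intro: Y_rep_scale(1))
  have "Ynorm (\<lambda>n. of_real r * c n) \<le> \<bar>r\<bar> * Ynorm c + e" if e: "e > 0" for e
  proof -
    have "e / (\<bar>r\<bar> + 1) > 0" using e by simp
    then obtain a b where rep: "Y_rep c a b" and lt: "(\<Sum>k. cost a b k) < Ynorm c + e / (\<bar>r\<bar> + 1)"
      using Ynorm_approx[OF assms] by blast
    have "Ynorm (\<lambda>n. of_real r * c n) \<le> \<bar>r\<bar> * (\<Sum>k. cost a b k)"
      using Ynorm_le_Y_rep[OF Y_rep_scale(1)[OF rep]] Y_rep_scale(2)[OF rep] by simp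
    also have "\<dots> \<le> \<bar>r\<bar> * Ynorm c + \<bar>r\<bar> / (\<bar>r\<bar> + 1) * e"
      using mult_left_mono[OF less_imp_le[OF lt], of "\<bar>r\<bar>"] by (simp add: algebra_simps)
    also have "\<dots> \<le> \<bar>r\<bar> * Ynorm c + e"
      using e by (simp add: field_simps)
    finally show ?thesis .
  qed
  thus "Ynorm (\<lambda>n. of_real r * c n) \<le> \<bar>r\<bar> * Ynorm c" by (rule field_le_epsilon)
qed

lemma
  assumes "c \<in> Yspace"
  shows Yspace_uminus: "(\<lambda>n. - c n) \<in> Yspace"
    and Ynorm_uminus: "Ynorm (\<lambda>n. - c n) = Ynorm c"
proof -
  have neg: "(\<lambda>n. - c n) = (\<lambda>n. of_real (-1) * c n)" by simp
  show minus_c: "(\<lambda>n. - c n) \<in> Yspace" unfolding neg by (rule Yspace_scale[OF assms])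
  have "Ynorm (\<lambda>n. - c n) \<le> Ynorm c" unfolding neg using Ynorm_scale_le[OF assms, of "-1"] by simp
  moreover have "Ynorm c \<le> Ynorm (\<lambda>n. - c n)" using Ynorm_scale_le[OF minus_c, of "-1"] by simp
  ultimately show "Ynorm (\<lambda>n. - c n) = Ynorm c" by simp
qed

lemma
  assumes "c \<in> Yspace" "d \<in> Yspace"
  shows Yspace_diff: "(\<lambda>n. c n - d n) \<in> Yspace"
    and Ynorm_minus_commute: "Ynorm (\<lambda>n. c n - d n) = Ynorm (\<lambda>n. d n - c n)"
proof -
  have diff: "(\<lambda>n. c n - d n) = (\<lambda>n. c n + - d n)" by simp
  show cd: "(\<lambda>n. c n - d n) \<in> Yspace"
    unfolding diff by (intro Yspace_add Yspace_uminus assms)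
  show "Ynorm (\<lambda>n. c n - d n) = Ynorm (\<lambda>n. d n - c n)"
    using Ynorm_uminus[OF cd] by simp
qed

lemma Ynorm_triangle:
  assumes "c \<in> Yspace" "d \<in> Yspace" "e \<in> Yspace"
  shows "Ynorm (\<lambda>n. c n - e n) \<le> Ynorm (\<lambda>n. c n - d n) + Ynorm (\<lambda>n. d n - e n)"
  using Ynorm_add_le[OF Yspace_diff[OF assms(1,2)] Yspace_diff[OF assms(2,3)]] by simp

lemma Ynorm_diff_ge:
  assumes "c \<in> Yspace" "d \<in> Yspace"
  shows "\<bar>Ynorm c - Ynorm d\<bar> \<le> Ynorm (\<lambda>n. c n - d n)"
proof -
  have "Ynorm c \<le> Ynorm (\<lambda>n. c n - d n) + Ynorm d"
    using Ynorm_triangle[OF assms Yspace_zero] by simp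
  moreover have "Ynorm d \<le> Ynorm (\<lambda>n. d n - c n) + Ynorm c"
    using Ynorm_triangle[OF assms(2,1) Yspace_zero] by simp
  ultimately show ?thesis using Ynorm_minus_commute[OF assms] by linarith
qed

lemma X_rep_in_l2: "X_rep c N a b \<Longrightarrow> k < N \<Longrightarrow> in_l2 (a k) \<and> in_l2 (b k)"
  by (simp add: X_rep_def fin_supp_imp_in_l2)

lemma X_rep_cost_nonneg: "X_rep c N a b \<Longrightarrow> 0 \<le> (\<Sum>k<N. cost a b k)"
  by (auto dest: X_rep_in_l2 intro!: sum_nonneg mult_nonneg_nonneg l2norm_nonneg)

lemma Xnorm_le_X_rep: "X_rep c N a b \<Longrightarrow> Xnorm c \<le> (\<Sum>k<N. cost a b k)"
  unfolding Xnorm_def by (rule cInf_lower) (auto intro!: bdd_belowI[of _ 0] X_rep_cost_nonneg)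

lemma Xnorm_approx:
  assumes "c \<in> Xspace" "e > 0"
  obtains N a b where "X_rep c N a b" "(\<Sum>k<N. cost a b k) < Xnorm c + e"
proof -
  have "{\<Sum>k<N. cost a b k | N a b. X_rep c N a b} \<noteq> {}"
    using assms by (auto simp: Xspace_def)
  from cInf_lessD[OF this, of "Xnorm c + e"] assms that show ?thesis
    by (auto simp: Xnorm_def)
qed

lemma
  assumes "c \<in> Xspace"
  shows Xspace_imp_Yspace: "c \<in> Yspace"
    and Ynorm_le_Xnorm: "Ynorm c \<le> Xnorm c"
proof -
  have Y: "\<exists>A B. Y_rep c A B \<and> (\<Sum>k. cost A B k) = (\<Sum>k<N. cost a b k)" if "X_rep c N a b" for N a b
    using that Y_rep_finite[of N a b] X_rep_in_l2[OF that] by (auto simp: X_rep_def)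
  show "c \<in> Yspace" using assms Y by (force simp: Xspace_def Yspace_def)
  have "Ynorm c \<le> (\<Sum>k<N. cost a b k)" if "X_rep c N a b" for N a b
    using Y[OF that] Ynorm_le_Y_rep by metis
  thus "Ynorm c \<le> Xnorm c" unfolding Xnorm_def using assms
    by (intro cInf_greatest) (auto simp: Xspace_def)
qed

lemma sum_lessThan_add_nat: "(\<Sum>k<N + (M::nat). f k) = (\<Sum>k<N. f k) + (\<Sum>k<M. f (N + k))"
  by (induction M) (simp_all add: add.assoc)

lemma X_rep_append:
  assumes "X_rep c N a b" "X_rep d M a' b'"
  defines "A \<equiv> \<lambda>k. if k < N then a k else a' (k - N)"
    and "B \<equiv> \<lambda>k. if k < N then b k else b' (k - N)"
  shows "X_rep (\<lambda>n. c n + d n) (N + M) A B"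
    and "(\<Sum>k<N + M. cost A B k) = (\<Sum>k<N. cost a b k) + (\<Sum>k<M. cost a' b' k)"
proof -
  have split: "(\<Sum>k<N + M. f (A k) (B k)) = (\<Sum>k<N. f (a k) (b k)) + (\<Sum>k<M. f (a' k) (b' k))"
    for f :: "_ \<Rightarrow> _ \<Rightarrow> 'a::comm_monoid_add"
    by (simp add: sum_lessThan_add_nat A_def B_def)
  show "(\<Sum>k<N + M. cost A B k) = (\<Sum>k<N. cost a b k) + (\<Sum>k<M. cost a' b' k)"
    by (rule split)
  have "fin_supp (A k) \<and> fin_supp (B k)" if "k < N + M" for k
    using assms(1,2) that by (auto simp: X_rep_def A_def B_def)
  moreover have "(\<lambda>n. c n + d n) = (\<lambda>n. \<Sum>k<N + M. dconv (A k) (B k) n)"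
    using assms(1,2) by (simp add: X_rep_def split[of "\<lambda>u v. dconv u v _"])
  ultimately show "X_rep (\<lambda>n. c n + d n) (N + M) A B" by (simp add: X_rep_def)
qed

lemma
  assumes "c \<in> Xspace" "d \<in> Xspace"
  shows Xspace_add: "(\<lambda>n. c n + d n) \<in> Xspace"
    and Xnorm_add_le: "Xnorm (\<lambda>n. c n + d n) \<le> Xnorm c + Xnorm d"
proof -
  show "(\<lambda>n. c n + d n) \<in> Xspace"
    using assms X_rep_append(1) unfolding Xspace_def by blast
  have "Xnorm (\<lambda>n. c n + d n) \<le> Xnorm c + Xnorm d + e" if "e > 0" for e
  proof -
    obtain N a b where c: "X_rep c N a b" "(\<Sum>k<N. cost a b k) < Xnorm c + e/2"
      using Xnorm_approx[OF assms(1)] \<open>e > 0\<close> half_gt_zero by blast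
    obtain M a' b' where d: "X_rep d M a' b'" "(\<Sum>k<M. cost a' b' k) < Xnorm d + e/2"
      using Xnorm_approx[OF assms(2)] \<open>e > 0\<close> half_gt_zero by blast
    show ?thesis
      using Xnorm_le_X_rep[OF X_rep_append(1)[OF c(1) d(1)]] X_rep_append(2)[OF c(1) d(1)] c(2) d(2)
      by simp
  qed
  thus "Xnorm (\<lambda>n. c n + d n) \<le> Xnorm c + Xnorm d" by (rule field_le_epsilon)
qed

lemma dconv_eq_0_beyond:
  assumes "\<And>i. L \<le> i \<Longrightarrow> a i = 0" "\<And>i. L \<le> i \<Longrightarrow> b i = 0" "L * L \<le> n"
  shows "dconv a b n = 0"
proof -
  have "a k * cnj (b (n div k)) = 0" if "k dvd n" for k
  proof (cases "k < L \<and> n div k < L")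
    case True
    hence "k * (n div k) < L * L" by (simp add: mult_strict_mono)
    with that assms(3) show ?thesis by simp
  next
    case False
    thus ?thesis using assms(1,2) by (auto simp: not_less)
  qed
  hence "(\<Sum>k | k dvd n. a k * cnj (b (n div k))) = 0" by (intro sum.neutral) simp
  thus ?thesis by (simp add: dconv_def)
qed

lemma finite_nat_iff_eventually_not: "finite {n::nat. P n} \<longleftrightarrow> (\<exists>L. \<forall>n\<ge>L. \<not> P n)"
proof
  assume "finite {n. P n}"
  then obtain L where "{n. P n} \<subseteq> {..<L}" by (auto simp: finite_nat_iff_bounded)
  hence "\<forall>n\<ge>L. \<not> P n" by auto
  thus "\<exists>L. \<forall>n\<ge>L. \<not> P n" ..
next
  assume "\<exists>L. \<forall>n\<ge>L. \<not> P n"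
  then obtain L where "\<forall>n\<ge>L. \<not> P n" ..
  hence "{n. P n} \<subseteq> {..<L}" by (auto simp: not_less[symmetric] simp del: not_less)
  thus "finite {n. P n}" by (rule finite_subset) simp
qed

lemma fin_supp_iff_eventually_0: "fin_supp c \<longleftrightarrow> c 0 = 0 \<and> (\<exists>L. \<forall>n\<ge>L. c n = 0)"
  by (simp add: fin_supp_def finite_nat_iff_eventually_not)

lemma Xspace_imp_fin_supp:
  assumes "c \<in> Xspace" shows "fin_supp c"
proof -
  obtain N a b where "X_rep c N a b" using assms by (auto simp: Xspace_def)
  hence supp: "\<And>k. k < N \<Longrightarrow> fin_supp (a k) \<and> fin_supp (b k)"
    and c: "c = (\<lambda>n. \<Sum>k<N. dconv (a k) (b k) n)" by (auto simp: X_rep_def)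
  have "{i. \<exists>k<N. a k i \<noteq> 0 \<or> b k i \<noteq> 0} \<subseteq> (\<Union>k<N. {i. a k i \<noteq> 0} \<union> {i. b k i \<noteq> 0})"
    by blast
  hence "finite {i. \<exists>k<N. a k i \<noteq> 0 \<or> b k i \<noteq> 0}"
    by (rule finite_subset) (use supp in \<open>auto simp: fin_supp_def\<close>)
  then obtain L where L: "\<And>k i. k < N \<Longrightarrow> L \<le> i \<Longrightarrow> a k i = 0 \<and> b k i = 0"
    unfolding finite_nat_iff_eventually_not by blast
  have "c n = 0" if "L * L \<le> n" for n
  proof -
    have "dconv (a k) (b k) n = 0" if "k < N" for k
      using L[OF that] \<open>L * L \<le> n\<close> by (intro dconv_eq_0_beyond) auto
    thus ?thesis by (simp add: c)
  qed
  moreover have "c 0 = 0" by (simp add: c dconv_def)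
  ultimately show ?thesis unfolding fin_supp_iff_eventually_0 by blast
qed

lemma dconv_delta_one: "dconv a (\<lambda>i. if i = 1 then 1 else 0) n = (if n = 0 then 0 else a n)"
proof (cases "n = 0")
  case False
  have "n div k = 1 \<longleftrightarrow> k = n" if "k dvd n" for k
    using that False by (auto elim!: dvdE)
  hence summand: "a k * cnj (if n div k = 1 then 1 else 0) = (if k = n then a n else 0)" if "k dvd n" for k
    using that by simp
  have "dconv a (\<lambda>i. if i = 1 then 1 else 0) n = (\<Sum>k | k dvd n. a k * cnj (if n div k = 1 then 1 else 0))"
    using False by (simp add: dconv_def)
  also have "\<dots> = (\<Sum>k | k dvd n. if k = n then a n else 0)"
    by (rule sum.cong[OF refl], rule summand) simp
  also have "\<dots> = a n" using False by (simp add: sum.delta')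
  finally show ?thesis using False by simp
qed (simp add: dconv_def)

text \<open>The witness is the diagonal representation \<open>d = \<Sum>\<^bsub>k<L\<^esub> (d k \<delta>\<^sub>k) \<star> \<delta>\<^sub>1\<close>.\<close>

lemma
  assumes "d 0 = 0" "\<And>n. L \<le> n \<Longrightarrow> d n = 0"
  shows Xspace_if_eventually_0: "d \<in> Xspace"
    and Xnorm_le_sum_norm: "Xnorm d \<le> (\<Sum>n<L. cmod (d n))"
proof -
  define a where "a = (\<lambda>k i. if i = k then d k else 0)"
  define b where "b = (\<lambda>k::nat. \<lambda>i::nat. if i = 1 then 1 else (0::complex))"
  have fin_supp: "fin_supp (a k)" "fin_supp (b k)" for k
    unfolding fin_supp_def a_def b_def using assms(1)
    by (auto intro: finite_subset[of _ "{k}"] finite_subset[of _ "{1}"])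
  have "dconv (a k) (b k) n = (if n = 0 then 0 else a k n)" for k n
    unfolding b_def by (rule dconv_delta_one)
  hence "dconv (a k) (b k) n = (if n = k then d n else 0)" for k n
    using assms(1) by (simp add: a_def)
  hence "(\<Sum>k<L. dconv (a k) (b k) n) = d n" for n
    using assms(2)[of n] by (simp add: not_le)
  hence rep: "X_rep d L a b" using fin_supp by (simp add: X_rep_def)
  thus "d \<in> Xspace" by (auto simp: Xspace_def)
  have "l2norm (a k) = cmod (d k)" "l2norm (b k) = 1" for k
    using l2norm_indicator[of k "d k"] l2norm_indicator[of 1 1] by (simp_all add: a_def b_def)
  thus "Xnorm d \<le> (\<Sum>n<L. cmod (d n))" using Xnorm_le_X_rep[OF rep] by simp
qed

lemma Xspace_iff_fin_supp: "c \<in> Xspace \<longleftrightarrow> fin_supp c"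
  using Xspace_imp_fin_supp Xspace_if_eventually_0 fin_supp_iff_eventually_0 by metis

lemma Xspace_scale: "c \<in> Xspace \<Longrightarrow> (\<lambda>n. z * c n) \<in> Xspace"
  by (auto simp: Xspace_iff_fin_supp fin_supp_def intro: finite_subset[of _ "{n. c n \<noteq> 0}"])

lemma Xspace_diff: "c \<in> Xspace \<Longrightarrow> d \<in> Xspace \<Longrightarrow> (\<lambda>n. c n - d n) \<in> Xspace"
  using Xspace_add[of c "\<lambda>n. (-1) * d n"] Xspace_scale[of d "-1"] by simp

section \<open>Density of \<open>X\<close> in \<open>\<Y>\<close>\<close>

definition trunc :: "nat \<Rightarrow> (nat \<Rightarrow> complex) \<Rightarrow> nat \<Rightarrow> complex" where
  "trunc M a = (\<lambda>i. if i < M then a i else 0)"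

definition tail :: "nat \<Rightarrow> (nat \<Rightarrow> complex) \<Rightarrow> nat \<Rightarrow> complex" where
  "tail M a = (\<lambda>i. if i < M then 0 else a i)"

lemma trunc_plus_tail: "(\<lambda>i. trunc M a i + tail M a i) = a"
  by (simp add: trunc_def tail_def fun_eq_iff)

lemma
  assumes "in_l2 a"
  shows fin_supp_trunc: "fin_supp (trunc M a)"
    and in_l2_trunc: "in_l2 (trunc M a)"
    and l2norm_trunc_le: "l2norm (trunc M a) \<le> l2norm a"
proof -
  show fin: "fin_supp (trunc M a)" unfolding fin_supp_def trunc_def
    using assms by (auto simp: in_l2_def intro: finite_subset[of _ "{..<M}"])
  show "in_l2 (trunc M a)" using fin_supp_imp_in_l2[OF fin] .
  show "l2norm (trunc M a) \<le> l2norm a"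
    by (rule in_l2_dominated(2)[OF assms]) (use assms in \<open>auto simp: trunc_def in_l2_def\<close>)
qed

lemma in_l2_tail: "in_l2 a \<Longrightarrow> in_l2 (tail M a)"
  by (rule in_l2_dominated(1)) (auto simp: tail_def in_l2_def)

lemma suminf_tail_tendsto_0:
  fixes f :: "nat \<Rightarrow> 'a::real_normed_vector"
  assumes "summable f"
  shows "(\<lambda>M. \<Sum>n. if n < M then 0 else f n) \<longlonglongrightarrow> 0"
proof -
  have "(\<lambda>n. if n < M then 0 else f n) sums (suminf f - (\<Sum>n<M. f n))" for M
    using sums_diff[OF summable_sums[OF assms] sums_If_finite_set[of "{..<M}" f]]
    by (simp add: if_distrib[of "\<lambda>x. f _ - x"] cong: if_cong)
  hence "(\<lambda>M. \<Sum>n. if n < M then 0 else f n) = (\<lambda>M. suminf f - (\<Sum>n<M. f n))"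
    by (simp add: sums_iff fun_eq_iff)
  moreover have "(\<lambda>M. suminf f - (\<Sum>n<M. f n)) \<longlonglongrightarrow> suminf f - suminf f"
    by (intro tendsto_intros summable_LIMSEQ assms)
  ultimately show ?thesis by simp
qed

lemma l2norm_tail_tendsto_0:
  assumes "in_l2 a"
  shows "(\<lambda>M. l2norm (tail M a)) \<longlonglongrightarrow> 0"
proof -
  have "(\<lambda>n. (cmod (tail M a n))\<^sup>2) = (\<lambda>n. if n < M then 0 else (cmod (a n))\<^sup>2)" for M
    by (auto simp: tail_def)
  moreover have "(\<lambda>M. sqrt (\<Sum>n. if n < M then 0 else (cmod (a n))\<^sup>2)) \<longlonglongrightarrow> sqrt 0"
    using assms by (intro tendsto_intros suminf_tail_tendsto_0) (simp add: in_l2_def)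
  ultimately show ?thesis by (simp add: l2norm_def)
qed

lemma dconv_minus_dconv_trunc:
  "dconv a b n - dconv (trunc M a) (trunc M b) n
     = dconv (tail M a) b n + dconv (trunc M a) (tail M b) n"
proof -
  have "dconv a b n = dconv (tail M a) b n + dconv (trunc M a) b n"
    using dconv_add_left[of "trunc M a" "tail M a" b n] by (simp only: trunc_plus_tail) simp
  moreover have "dconv (trunc M a) b n = dconv (trunc M a) (trunc M b) n + dconv (trunc M a) (tail M b) n"
    using dconv_add_right[of "trunc M a" "trunc M b" "tail M b" n] by (simp only: trunc_plus_tail)
  ultimately show ?thesis by simp
qed

lemma
  assumes "in_l2 a" "in_l2 b"
  shows dconv_minus_dconv_trunc_in_Yspace:
      "(\<lambda>n. dconv a b n - dconv (trunc M a) (trunc M b) n) \<in> Yspace"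
    and Ynorm_dconv_minus_dconv_trunc:
      "Ynorm (\<lambda>n. dconv a b n - dconv (trunc M a) (trunc M b) n)
         \<le> l2norm (tail M a) * l2norm b + l2norm a * l2norm (tail M b)"
proof -
  note tails = dconv_in_Yspace[OF in_l2_tail[OF assms(1), of M] assms(2)]
    dconv_in_Yspace[OF in_l2_trunc[OF assms(1), of M] in_l2_tail[OF assms(2), of M]]
  have "l2norm (trunc M a) * l2norm (tail M b) \<le> l2norm a * l2norm (tail M b)"
    using assms by (intro mult_right_mono l2norm_trunc_le l2norm_nonneg in_l2_tail)
  thus "(\<lambda>n. dconv a b n - dconv (trunc M a) (trunc M b) n) \<in> Yspace"
    "Ynorm (\<lambda>n. dconv a b n - dconv (trunc M a) (trunc M b) n)
       \<le> l2norm (tail M a) * l2norm b + l2norm a * l2norm (tail M b)"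
    unfolding dconv_minus_dconv_trunc using Yspace_add[OF tails(1,3)] Ynorm_add_le[OF tails(1,3)] tails(2,4)
    by auto
qed

lemma Ynorm_minus_truncated_rep_le:
  assumes rep: "Y_rep y a b"
  shows "Ynorm (\<lambda>n. y n - (\<Sum>k<K. dconv (trunc M (a k)) (trunc M (b k)) n))
    \<le> (\<Sum>k<K. l2norm (tail M (a k)) * l2norm (b k) + l2norm (a k) * l2norm (tail M (b k)))
      + (\<Sum>k. if k < K then 0 else cost a b k)"
proof -
  have l2: "\<And>k. in_l2 (a k) \<and> in_l2 (b k)" and costs: "summable (cost a b)"
    and sums: "\<And>n. (\<lambda>k. dconv (a k) (b k) n) sums y n" using rep by (auto simp: Y_rep_def)
  define d where "d = (\<lambda>k n. dconv (a k) (b k) n - (if k < K then dconv (trunc M (a k)) (trunc M (b k)) n else 0))"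
  define bound where "bound = (\<lambda>k. (if k \<in> {..<K} then l2norm (tail M (a k)) * l2norm (b k)
      + l2norm (a k) * l2norm (tail M (b k)) else 0) + (if k < K then 0 else cost a b k))"
  have d: "d k \<in> Yspace \<and> Ynorm (d k) \<le> bound k" for k
  proof (cases "k < K")
    case True
    thus ?thesis using dconv_minus_dconv_trunc_in_Yspace Ynorm_dconv_minus_dconv_trunc l2
      by (simp add: d_def bound_def)
  next
    case False
    hence "d k = dconv (a k) (b k)" by (simp add: d_def fun_eq_iff)
    thus ?thesis using dconv_in_Yspace l2 False by (simp add: bound_def)
  qed
  have bound_sums: "bound sums ((\<Sum>k<K. l2norm (tail M (a k)) * l2norm (b k) + l2norm (a k) * l2norm (tail M (b k)))
      + (\<Sum>k. if k < K then 0 else cost a b k))"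
    unfolding bound_def
    by (intro sums_add sums_If_finite_set summable_sums summable_comparison_test[OF _ costs])
      (use Y_rep_cost_nonneg[OF rep] in auto)
  have Ynorm_summable: "summable (\<lambda>k. Ynorm (d k))"
    by (rule summable_comparison_test[OF _ sums_summable[OF bound_sums]])
      (use d Ynorm_nonneg in auto)
  have "(\<lambda>n. \<Sum>k. d k n) = (\<lambda>n. y n - (\<Sum>k<K. dconv (trunc M (a k)) (trunc M (b k)) n))"
  proof
    fix n
    have "(\<lambda>k. if k \<in> {..<K} then dconv (trunc M (a k)) (trunc M (b k)) n else 0)
        sums (\<Sum>k<K. dconv (trunc M (a k)) (trunc M (b k)) n)"
      by (rule sums_If_finite_set) simp
    from sums_diff[OF sums this] show "(\<Sum>k. d k n) = y n - (\<Sum>k<K. dconv (trunc M (a k)) (trunc M (b k)) n)"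
      by (simp add: d_def sums_iff)
  qed
  hence "Ynorm (\<lambda>n. y n - (\<Sum>k<K. dconv (trunc M (a k)) (trunc M (b k)) n)) \<le> (\<Sum>k. Ynorm (d k))"
    using Yspace_suminf(2)[OF _ Ynorm_summable] d by auto
  also have "\<dots> \<le> suminf bound"
    by (rule suminf_le[OF _ Ynorm_summable sums_summable[OF bound_sums]]) (use d in auto)
  finally show ?thesis using bound_sums by (simp add: sums_iff)
qed

lemma Xspace_dense_in_Yspace:
  assumes y: "y \<in> Yspace" and e: "e > 0"
  obtains c where "c \<in> Xspace" "Ynorm (\<lambda>n. y n - c n) < e"
proof -
  obtain a b where rep: "Y_rep y a b" using y by (auto simp: Yspace_def)
  have l2: "\<And>k. in_l2 (a k) \<and> in_l2 (b k)" and costs: "summable (cost a b)"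
    using rep by (auto simp: Y_rep_def)
  obtain K where K: "(\<Sum>k. if k < K then 0 else cost a b k) < e/2"
    using order_tendstoD(2)[OF suminf_tail_tendsto_0[OF costs], of "e/2"] e
    by (auto simp: eventually_sequentially)
  define err where "err = (\<lambda>M. \<Sum>k<K. l2norm (tail M (a k)) * l2norm (b k) + l2norm (a k) * l2norm (tail M (b k)))"
  have "err \<longlonglongrightarrow> (\<Sum>k<K. 0 * l2norm (b k) + l2norm (a k) * 0)"
    unfolding err_def using l2 by (intro tendsto_intros l2norm_tail_tendsto_0) auto
  then obtain M where M: "err M < e/2"
    using order_tendstoD(2)[of err 0 sequentially "e/2"] e by (auto simp: eventually_sequentially)
  define c where "c = (\<lambda>n. \<Sum>k<K. dconv (trunc M (a k)) (trunc M (b k)) n)"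
  have "X_rep c K (\<lambda>k. trunc M (a k)) (\<lambda>k. trunc M (b k))"
    unfolding X_rep_def c_def using l2 fin_supp_trunc by auto
  hence "c \<in> Xspace" by (auto simp: Xspace_def)
  moreover have "Ynorm (\<lambda>n. y n - c n) < e"
    using Ynorm_minus_truncated_rep_le[OF rep, where K=K and M=M] K M by (simp add: c_def err_def)
  ultimately show ?thesis by (rule that)
qed

section \<open>Weights supported on smooth numbers\<close>

definition smooth :: "nat \<Rightarrow> nat \<Rightarrow> bool" where
  "smooth S n \<longleftrightarrow> n > 0 \<and> (\<forall>p. prime p \<and> p dvd n \<longrightarrow> p \<le> S)"

definition smooth_weight :: "nat \<Rightarrow> real \<Rightarrow> nat \<Rightarrow> real" where
  "smooth_weight S r n = (if smooth S n then r ^ size (prime_factorization n) else 0)"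

lemma smooth_mult: "smooth S (k * m) \<longleftrightarrow> smooth S k \<and> smooth S m"
  unfolding smooth_def by (auto simp: prime_dvd_mult_iff)

lemma smooth_weight_mult: "smooth_weight S r (k * m) = smooth_weight S r k * smooth_weight S r m"
proof (cases "smooth S k \<and> smooth S m")
  case True
  hence "k \<noteq> 0" "m \<noteq> 0" by (auto simp: smooth_def)
  thus ?thesis using True by (simp add: smooth_weight_def smooth_mult prime_factorization_mult power_add)
qed (auto simp: smooth_weight_def smooth_mult)

lemma smooth_weight_power: "smooth_weight S r (k ^ e) = smooth_weight S r k ^ e"
  by (induction e) (simp_all add: smooth_weight_mult, simp add: smooth_weight_def smooth_def)

lemma smooth_weight_nonneg: "0 \<le> r \<Longrightarrow> 0 \<le> smooth_weight S r n"
  by (simp add: smooth_weight_def)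

lemma smooth_weight_le_1: "0 \<le> r \<Longrightarrow> r \<le> 1 \<Longrightarrow> smooth_weight S r n \<le> 1"
  by (simp add: smooth_weight_def power_le_one)

lemma smooth_weight_small: "0 < n \<Longrightarrow> n \<le> S \<Longrightarrow> smooth_weight S r n = r ^ size (prime_factorization n)"
  unfolding smooth_weight_def smooth_def by (meson dvd_imp_le order.trans)

lemma smooth_0_iff: "smooth 0 n \<longleftrightarrow> n = 1"
proof
  assume smooth: "smooth 0 n"
  show "n = 1"
  proof (rule ccontr)
    assume "n \<noteq> 1"
    then obtain p where "prime p" "p dvd n" using prime_factor_nat by blast
    with smooth show False by (auto simp: smooth_def)
  qed
qed (auto simp: smooth_def)

lemma prime_power_mult_inj:
  fixes p :: nat
  assumes "prime p" "\<not> p dvd m" "\<not> p dvd m'" "m \<noteq> 0" "m' \<noteq> 0" "p ^ e * m = p ^ e' * m'"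
  shows "e = e'" "m = m'"
proof -
  have "multiplicity p (p ^ i * k) = i" if "\<not> p dvd k" "k \<noteq> 0" for i k
    using assms(1) that by (simp add: prime_elem_multiplicity_mult_distrib not_dvd_imp_multiplicity_0)
  thus "e = e'" using assms by metis
  thus "m = m'" using assms prime_gt_0_nat[OF assms(1)] by simp
qed

lemma smooth_prime_power_decompose:
  assumes p: "prime p" and n: "smooth p n"
  obtains e m where "n = p ^ e * m" "smooth (p - 1) m" "e < n" "m \<le> n"
proof -
  have p1: "p > 1" using prime_gt_1_nat[OF p] .
  have n0: "n \<noteq> 0" using n by (auto simp: smooth_def)
  define e where "e = multiplicity p n"
  define m where "m = n div p ^ e"
  have decomp: "n = p ^ e * m" unfolding m_def e_def using multiplicity_dvd[of p n] by simp
  have not_dvd: "\<not> p dvd m" unfolding m_def e_def by (rule multiplicity_decompose) (use n0 p1 in auto)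
  have smooth_m: "smooth p m" using n decomp by (simp add: smooth_mult)
  have "smooth (p - 1) m" unfolding smooth_def
  proof (intro conjI allI impI)
    show "0 < m" using smooth_m by (simp add: smooth_def)
    fix q assume q: "prime q \<and> q dvd m"
    hence "q \<le> p" using smooth_m by (auto simp: smooth_def)
    moreover have "q \<noteq> p" using q not_dvd by auto
    ultimately show "q \<le> p - 1" by simp
  qed
  moreover have "m \<noteq> 0" "1 \<le> p ^ e" using decomp n0 p1 by auto
  hence "m \<le> n" using mult_le_mono1[of 1 "p ^ e" m] decomp by simp
  moreover have "e < n"
  proof -
    have "e < 2 ^ e" by (rule less_exp)
    also have "\<dots> \<le> p ^ e" using p1 by (intro power_mono) auto
    also have "\<dots> \<le> n" using decomp \<open>m \<noteq> 0\<close> by simp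
    finally show ?thesis .
  qed
  ultimately show ?thesis using decomp that by blast
qed

text \<open>Writing a \<open>p\<close>-smooth \<open>n\<close> uniquely as \<open>p\<^sup>e m\<close> with \<open>m\<close> being
  \<open>(p - 1)\<close>-smooth contributes the Euler factor \<open>\<Sum>\<^sub>e r\<^sup>2\<^sup>e = 1 / (1 - r\<^sup>2)\<close>.\<close>

lemma sum_smooth_weight_prime_step:
  assumes p: "prime p"
  shows "(\<Sum>n<N. (smooth_weight p r n)\<^sup>2)
    \<le> (\<Sum>e<N. (r\<^sup>2) ^ e) * (\<Sum>m<N. (smooth_weight (p - 1) r m)\<^sup>2)"
proof -
  have p1: "p > 1" using prime_gt_1_nat[OF p] .
  define I where "I = {..<N} \<times> {m. m < N \<and> smooth (p - 1) m}"
  define g where "g = (\<lambda>(e::nat, m::nat). p ^ e * m)"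
  have smooth_pred: "\<not> p dvd m" "smooth p m" if "smooth (p - 1) m" for m
    using that p1 p by (auto simp: smooth_def)
  have "inj_on g I"
  proof (rule inj_onI, clarify)
    fix e m e' m' assume "(e, m) \<in> I" "(e', m') \<in> I" "g (e, m) = g (e', m')"
    thus "e = e' \<and> m = m'"
      using prime_power_mult_inj[OF p, of m m' e e'] smooth_pred
      by (auto simp: I_def g_def smooth_def)
  qed
  have "n \<in> g ` I" if n: "n < N" and smooth_n: "smooth p n" for n
  proof -
    obtain e m where decomp: "n = p ^ e * m" "smooth (p - 1) m" and "e < n" "m \<le> n"
      using smooth_prime_power_decompose[OF p smooth_n] .
    hence "e < N" "m < N" using n by linarith+
    thus ?thesis using decomp by (auto simp: I_def g_def intro!: image_eqI[of _ _ "(e, m)"])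
  qed
  hence "{n. n < N \<and> smooth p n} \<subseteq> g ` I" by blast
  have weight_g: "(smooth_weight p r (g x))\<^sup>2 = (r\<^sup>2) ^ fst x * (smooth_weight (p - 1) r (snd x))\<^sup>2"
    if "x \<in> I" for x
  proof -
    obtain e m where x: "x = (e, m)" by fastforce
    have "smooth_weight p r p = r"
      using p by (simp add: smooth_weight_def smooth_def prime_factorization_prime dvd_imp_le prime_gt_0_nat)
    moreover have "smooth_weight p r m = smooth_weight (p - 1) r m"
      using that smooth_pred by (simp add: smooth_weight_def x I_def)
    ultimately show ?thesis
      by (simp add: g_def x smooth_weight_mult smooth_weight_power power_mult_distrib power_mult[symmetric] mult.commute)
  qed
  have "(\<Sum>n<N. (smooth_weight p r n)\<^sup>2) = (\<Sum>n\<in>{n. n < N \<and> smooth p n}. (smooth_weight p r n)\<^sup>2)"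
    by (rule sum.mono_neutral_right) (auto simp: smooth_weight_def)
  also have "\<dots> \<le> (\<Sum>n\<in>g ` I. (smooth_weight p r n)\<^sup>2)"
    by (rule sum_mono2) (use \<open>{n. n < N \<and> smooth p n} \<subseteq> g ` I\<close> in \<open>auto simp: I_def\<close>)
  also have "\<dots> = (\<Sum>x\<in>I. (r\<^sup>2) ^ fst x * (smooth_weight (p - 1) r (snd x))\<^sup>2)"
    using \<open>inj_on g I\<close> weight_g by (simp add: sum.reindex)
  also have "\<dots> \<le> (\<Sum>x\<in>{..<N} \<times> {..<N}. (r\<^sup>2) ^ fst x * (smooth_weight (p - 1) r (snd x))\<^sup>2)"
    by (rule sum_mono2) (auto simp: I_def)
  also have "\<dots> = (\<Sum>e<N. (r\<^sup>2) ^ e) * (\<Sum>m<N. (smooth_weight (p - 1) r m)\<^sup>2)"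
    by (simp add: sum_product sum.cartesian_product split_def)
  finally show ?thesis .
qed

lemma sum_smooth_weight_le:
  assumes "0 \<le> r" "r < 1"
  shows "(\<Sum>n<N. (smooth_weight S r n)\<^sup>2) \<le> (1 / (1 - r\<^sup>2)) ^ S"
proof (induction S arbitrary: N)
  case 0
  have "(\<Sum>n<N. (smooth_weight 0 r n)\<^sup>2) = (\<Sum>n<N. if n = 1 then 1 else 0)"
    by (rule sum.cong) (auto simp: smooth_weight_def smooth_0_iff)
  thus ?case by simp
next
  case (Suc S)
  have r2: "0 \<le> r\<^sup>2" "r\<^sup>2 < 1" using assms by (auto simp: abs_square_less_1)
  hence geom: "(\<Sum>e<N. (r\<^sup>2) ^ e) \<le> 1 / (1 - r\<^sup>2)" for N
    using sum_le_suminf[of "\<lambda>e. (r\<^sup>2) ^ e" "{..<N}"] suminf_geometric[of "r\<^sup>2"] by simp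
  have "1 \<le> 1 / (1 - r\<^sup>2)" using r2 by simp
  show ?case
  proof (cases "prime (Suc S)")
    case True
    have "(\<Sum>n<N. (smooth_weight (Suc S) r n)\<^sup>2) \<le> (1 / (1 - r\<^sup>2)) * (1 / (1 - r\<^sup>2)) ^ S"
      using sum_smooth_weight_prime_step[OF True, where N=N and r=r] r2
      by (intro order.trans[OF _ mult_mono[OF geom Suc.IH]]) (auto intro: sum_nonneg)
    thus ?thesis by simp
  next
    case False
    hence "smooth (Suc S) n = smooth S n" for n
      unfolding smooth_def by (auto simp: le_Suc_eq)
    hence "(\<Sum>n<N. (smooth_weight (Suc S) r n)\<^sup>2) = (\<Sum>n<N. (smooth_weight S r n)\<^sup>2)"
      by (simp add: smooth_weight_def)
    also have "\<dots> \<le> (1 / (1 - r\<^sup>2)) ^ S" by (rule Suc.IH)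
    also have "\<dots> \<le> (1 / (1 - r\<^sup>2)) ^ Suc S"
      using \<open>1 \<le> 1 / (1 - r\<^sup>2)\<close> by (intro power_increasing) auto
    finally show ?thesis .
  qed
qed

lemma summable_smooth_weight_squared:
  "0 \<le> r \<Longrightarrow> r < 1 \<Longrightarrow> summable (\<lambda>n. (smooth_weight S r n)\<^sup>2)"
  by (rule summableI_nonneg_bounded[OF _ sum_smooth_weight_le]) auto

lemma sum_norm_dconv_le:
  "(\<Sum>n<N. cmod (dconv u v n)) \<le> (\<Sum>i<N. cmod (u i)) * (\<Sum>j<N. cmod (v j))"
proof -
  define h where "h = (\<lambda>(i, j). cmod (u i) * cmod (v j))"
  define S where "S = Sigma {1..<N} (\<lambda>n. {i. i dvd n})"
  define \<phi> where "\<phi> = (\<lambda>(n::nat, i::nat). (i, n div i))"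
  have "inj_on \<phi> S"
  proof (rule inj_onI, clarify)
    fix n i n' i' assume "(n, i) \<in> S" "(n', i') \<in> S" "\<phi> (n, i) = \<phi> (n', i')"
    hence "i dvd n" "i' dvd n'" "i = i'" "n div i = n' div i'" by (auto simp: S_def \<phi>_def)
    thus "n = n' \<and> i = i'" by (metis dvd_mult_div_cancel)
  qed
  have "\<phi> x \<in> {..<N} \<times> {..<N}" if "x \<in> S" for x
  proof -
    obtain n i where x: "x = (n, i)" by fastforce
    hence "n < N" "i \<le> n" using that by (auto simp: S_def dvd_imp_le)
    thus ?thesis by (auto simp: x \<phi>_def intro: le_less_trans[OF div_le_dividend])
  qed
  hence "\<phi> ` S \<subseteq> {..<N} \<times> {..<N}" by blast
  have "(\<Sum>n<N. cmod (dconv u v n)) = (\<Sum>n\<in>{1..<N}. cmod (dconv u v n))"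
    by (rule sum.mono_neutral_right) (auto simp: dconv_def)
  also have "\<dots> \<le> (\<Sum>n\<in>{1..<N}. \<Sum>i | i dvd n. h (i, n div i))"
    unfolding h_def using norm_dconv_le by (intro sum_mono) simp
  also have "\<dots> = (\<Sum>x\<in>S. h (\<phi> x))"
    unfolding S_def \<phi>_def by (subst sum.Sigma) (auto simp: split_def)
  also have "\<dots> = (\<Sum>y\<in>\<phi> ` S. h y)"
    using \<open>inj_on \<phi> S\<close> by (simp add: sum.reindex)
  also have "\<dots> \<le> (\<Sum>y\<in>{..<N} \<times> {..<N}. h y)"
    by (rule sum_mono2) (use \<open>\<phi> ` S \<subseteq> _\<close> in \<open>auto simp: h_def\<close>)
  also have "\<dots> = (\<Sum>i<N. cmod (u i)) * (\<Sum>j<N. cmod (v j))"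
    by (simp add: h_def sum_product sum.cartesian_product)
  finally show ?thesis .
qed

definition weighted :: "(nat \<Rightarrow> real) \<Rightarrow> (nat \<Rightarrow> complex) \<Rightarrow> nat \<Rightarrow> complex" where
  "weighted w a = (\<lambda>i. of_real (w i) * a i)"

lemma sum_norm_weighted_le:
  assumes w: "summable (\<lambda>i. (w i)\<^sup>2)" and a: "in_l2 a"
  shows "(\<Sum>i<N. cmod (weighted w a i)) \<le> sqrt (\<Sum>i. (w i)\<^sup>2) * l2norm a"
proof -
  have "(\<Sum>i<N. cmod (weighted w a i)) = (\<Sum>i<N. \<bar>w i\<bar> * \<bar>cmod (a i)\<bar>)"
    by (simp add: weighted_def norm_mult)
  also have "\<dots> \<le> L2_set w {..<N} * L2_set (\<lambda>i. cmod (a i)) {..<N}"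
    by (rule L2_set_mult_ineq)
  also have "\<dots> \<le> sqrt (\<Sum>i. (w i)\<^sup>2) * l2norm a"
  proof (rule mult_mono)
    show "L2_set w {..<N} \<le> sqrt (\<Sum>i. (w i)\<^sup>2)"
      unfolding L2_set_def by (intro real_sqrt_le_mono sum_le_suminf w) auto
  qed (use w a in \<open>auto intro: suminf_nonneg L2_set_le_l2norm\<close>)
  finally show ?thesis .
qed

lemma
  assumes "in_l2 a" "\<And>i. 0 \<le> w i" "\<And>i. w i \<le> 1"
  shows in_l2_weighted: "in_l2 (weighted w a)"
    and l2norm_weighted_le: "l2norm (weighted w a) \<le> l2norm a"
proof -
  have "cmod (weighted w a i) \<le> cmod (a i)" for i
    using assms(2,3)[of i] by (simp add: weighted_def norm_mult mult_left_le_one_le)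
  thus "in_l2 (weighted w a)" "l2norm (weighted w a) \<le> l2norm a"
    using in_l2_dominated[OF assms(1)] assms(1) by (auto simp: weighted_def in_l2_def)
qed

lemma dconv_weighted:
  assumes mult: "\<And>i j. w (i * j) = w i * w j"
  shows "dconv (weighted w a) (weighted w b) n = of_real (w n) * dconv a b n"
proof (cases "n = 0")
  case False
  have "of_real (w k) * a k * cnj (of_real (w (n div k)) * b (n div k))
      = of_real (w n) * (a k * cnj (b (n div k)))" if "k dvd n" for k
    using mult[of k "n div k"] that by simp
  hence "(\<Sum>k | k dvd n. of_real (w k) * a k * cnj (of_real (w (n div k)) * b (n div k)))
      = (\<Sum>k | k dvd n. of_real (w n) * (a k * cnj (b (n div k))))"
    by (intro sum.cong) auto
  thus ?thesis using False by (simp add: dconv_def weighted_def sum_distrib_left)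
qed (simp add: dconv_def)

lemma sum_norm_dconv_weighted_le:
  assumes w: "summable (\<lambda>i. (w i)\<^sup>2)" and "in_l2 a" "in_l2 b"
  shows "(\<Sum>n<N. cmod (dconv (weighted w a) (weighted w b) n)) \<le> (\<Sum>i. (w i)\<^sup>2) * (l2norm a * l2norm b)"
proof -
  have W: "0 \<le> (\<Sum>i. (w i)\<^sup>2)" using w by (intro suminf_nonneg) auto
  have "(\<Sum>n<N. cmod (dconv (weighted w a) (weighted w b) n))
      \<le> (\<Sum>i<N. cmod (weighted w a i)) * (\<Sum>j<N. cmod (weighted w b j))"
    by (rule sum_norm_dconv_le)
  also have "\<dots> \<le> (sqrt (\<Sum>i. (w i)\<^sup>2) * l2norm a) * (sqrt (\<Sum>i. (w i)\<^sup>2) * l2norm b)"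
    using assms W l2norm_nonneg by (intro mult_mono sum_norm_weighted_le) (auto intro: sum_nonneg)
  also have "\<dots> = (\<Sum>i. (w i)\<^sup>2) * (l2norm a * l2norm b)" using W by simp
  finally show ?thesis .
qed

lemma sum_norm_dconv_weighted_minus_trunc_le:
  fixes M :: nat
  assumes w: "summable (\<lambda>i. (w i)\<^sup>2)" "\<And>i. 0 \<le> w i" "\<And>i. w i \<le> 1"
    and a: "in_l2 a" and b: "in_l2 b"
  defines "W \<equiv> sqrt (\<Sum>i. (w i)\<^sup>2)" and "T \<equiv> sqrt (\<Sum>i. if i < M then 0 else (w i)\<^sup>2)"
  shows "(\<Sum>n<N. cmod (dconv (weighted w a) (weighted w b) n
            - dconv (trunc M (weighted w a)) (trunc M (weighted w b)) n))
     \<le> 2 * W * T * (l2norm a * l2norm b)"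
proof -
  define v where "v = (\<lambda>i. if i < M then 0 else w i)"
  have v: "summable (\<lambda>i. (v i)\<^sup>2)"
    by (rule summable_comparison_test[OF _ w(1)]) (auto simp: v_def)
  have v_squared: "(\<lambda>i. (v i)\<^sup>2) = (\<lambda>i. if i < M then 0 else (w i)\<^sup>2)"
    by (auto simp: v_def)
  have W0: "0 \<le> W" and T0: "0 \<le> T"
    unfolding W_def T_def using w(1) v unfolding v_squared by (auto intro: suminf_nonneg)
  have tail_weighted: "tail M (weighted w x) = weighted v x" for x
    by (auto simp: tail_def weighted_def v_def)
  have A: "(\<Sum>i<N. cmod (weighted w a i)) \<le> W * l2norm a"
    and B: "(\<Sum>i<N. cmod (weighted w b i)) \<le> W * l2norm b"
    unfolding W_def by (intro sum_norm_weighted_le w a b)+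
  have tail_A: "(\<Sum>i<N. cmod (tail M (weighted w a) i)) \<le> T * l2norm a"
    and tail_B: "(\<Sum>i<N. cmod (tail M (weighted w b) i)) \<le> T * l2norm b"
    unfolding T_def tail_weighted using sum_norm_weighted_le[OF v] a b
    by (simp_all add: v_squared)
  have trunc_A: "(\<Sum>i<N. cmod (trunc M (weighted w a) i)) \<le> W * l2norm a"
    by (rule order.trans[OF sum_mono A]) (auto simp: trunc_def)
  have "(\<Sum>n<N. cmod (dconv (weighted w a) (weighted w b) n
            - dconv (trunc M (weighted w a)) (trunc M (weighted w b)) n))
      \<le> (\<Sum>n<N. cmod (dconv (tail M (weighted w a)) (weighted w b) n))
        + (\<Sum>n<N. cmod (dconv (trunc M (weighted w a)) (tail M (weighted w b)) n))"
    unfolding dconv_minus_dconv_trunc by (simp add: sum.distrib[symmetric] sum_mono norm_triangle_ineq)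
  also have "\<dots> \<le> (T * l2norm a) * (W * l2norm b) + (W * l2norm a) * (T * l2norm b)"
    using T0 W0 l2norm_nonneg[OF a]
    by (intro add_mono order.trans[OF sum_norm_dconv_le] mult_mono tail_A tail_B B trunc_A)
      (auto intro: sum_nonneg)
  also have "\<dots> = 2 * W * T * (l2norm a * l2norm b)" by (simp add: algebra_simps)
  finally show ?thesis .
qed

lemma sum_norm_suminf_le:
  fixes f :: "nat \<Rightarrow> nat \<Rightarrow> 'a::banach"
  assumes sums: "\<And>n. (\<lambda>k. f k n) sums s n"
    and le: "\<And>k. (\<Sum>n<N. norm (f k n)) \<le> \<beta> k" and \<beta>: "summable \<beta>"
  shows "(\<Sum>n<N. norm (s n)) \<le> suminf \<beta>"
proof -
  have norms: "summable (\<lambda>k. norm (f k n))" if "n < N" for n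
  proof (rule summable_comparison_test[OF _ \<beta>], intro exI allI impI)
    fix k
    have "norm (f k n) \<le> (\<Sum>n<N. norm (f k n))"
      using that by (intro member_le_sum) auto
    thus "norm (norm (f k n)) \<le> \<beta> k" using le[of k] by simp
  qed
  have "(\<Sum>n<N. norm (s n)) \<le> (\<Sum>n<N. \<Sum>k. norm (f k n))"
  proof (rule sum_mono)
    fix n assume "n \<in> {..<N}"
    thus "norm (s n) \<le> (\<Sum>k. norm (f k n))"
      using summable_norm[OF norms] sums[of n] sums_unique by fastforce
  qed
  also have "\<dots> = (\<Sum>k. \<Sum>n<N. norm (f k n))"
    using norms by (intro suminf_sum[symmetric]) auto
  also have "\<dots> \<le> suminf \<beta>"
    using norms by (intro suminf_le[OF le _ \<beta>] summable_sum) auto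
  finally show ?thesis .
qed

section \<open>The two norms agree on \<open>X\<close>\<close>

lemma fin_supp_weighted: "fin_supp c \<Longrightarrow> fin_supp (weighted w c)"
  unfolding fin_supp_def weighted_def by (auto intro: finite_subset[of _ "{n. c n \<noteq> 0}"])

lemma sum_norm_weighted_minus_truncated_le:
  fixes M :: nat
  assumes rep: "Y_rep c a b"
    and w_mult: "\<And>i j. w (i * j) = w i * w j" and w_nonneg: "\<And>i. 0 \<le> w i"
    and w_le_1: "\<And>i. w i \<le> 1" and w_summable: "summable (\<lambda>i. (w i)\<^sup>2)"
  defines "W2 \<equiv> \<Sum>i. (w i)\<^sup>2" and "T2 \<equiv> \<Sum>i. if i < M then 0 else (w i)\<^sup>2"
  shows "(\<Sum>n<N. cmod (weighted w c n
      - (\<Sum>k<K. dconv (trunc M (weighted w (a k))) (trunc M (weighted w (b k))) n)))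
    \<le> 2 * sqrt W2 * sqrt T2 * (\<Sum>k. cost a b k) + W2 * (\<Sum>k. if k < K then 0 else cost a b k)"
proof -
  have l2: "\<And>k. in_l2 (a k) \<and> in_l2 (b k)" and costs: "summable (cost a b)"
    and sums: "\<And>n. (\<lambda>k. dconv (a k) (b k) n) sums c n" using rep by (auto simp: Y_rep_def)
  have cost_nonneg: "\<And>k. 0 \<le> cost a b k" using Y_rep_cost_nonneg[OF rep] .
  have W2_nonneg: "0 \<le> W2" unfolding W2_def using w_summable by (auto intro: suminf_nonneg)
  have T2_nonneg: "0 \<le> T2"
    unfolding T2_def by (rule suminf_nonneg, rule summable_comparison_test[OF _ w_summable]) auto
  define A where "A = (\<lambda>k. weighted w (a k))"
  define B where "B = (\<lambda>k. weighted w (b k))"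
  define \<rho> where "\<rho> = (\<lambda>k n. dconv (A k) (B k) n - (if k < K then dconv (trunc M (A k)) (trunc M (B k)) n else 0))"
  define \<beta> where "\<beta> = (\<lambda>k. (if k \<in> {..<K} then 2 * sqrt W2 * sqrt T2 * cost a b k else 0)
      + W2 * (if k < K then 0 else cost a b k))"
  have "(\<lambda>k. \<rho> k n) sums (weighted w c n - (\<Sum>k<K. dconv (trunc M (A k)) (trunc M (B k)) n))" for n
  proof -
    have "(\<lambda>k. dconv (A k) (B k) n) sums weighted w c n"
      unfolding A_def B_def dconv_weighted[OF w_mult] by (unfold weighted_def) (rule sums_mult[OF sums])
    moreover have "(\<lambda>k. if k \<in> {..<K} then dconv (trunc M (A k)) (trunc M (B k)) n else 0)
        sums (\<Sum>k<K. dconv (trunc M (A k)) (trunc M (B k)) n)"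
      by (rule sums_If_finite_set) simp
    ultimately show ?thesis using sums_diff unfolding \<rho>_def by fastforce
  qed
  moreover have "(\<Sum>n<N. cmod (\<rho> k n)) \<le> \<beta> k" for k
  proof (cases "k < K")
    case True
    thus ?thesis unfolding \<rho>_def \<beta>_def A_def B_def W2_def T2_def
      using sum_norm_dconv_weighted_minus_trunc_le[OF w_summable w_nonneg w_le_1, of "a k" "b k" M N] l2
      by simp
  next
    case False
    thus ?thesis unfolding \<rho>_def \<beta>_def A_def B_def W2_def
      using sum_norm_dconv_weighted_le[OF w_summable, of "a k" "b k" N] l2 by simp
  qed
  moreover have \<beta>_sums: "\<beta> sums ((\<Sum>k<K. 2 * sqrt W2 * sqrt T2 * cost a b k)
      + W2 * (\<Sum>k. if k < K then 0 else cost a b k))"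
    unfolding \<beta>_def using cost_nonneg
    by (intro sums_add sums_If_finite_set sums_mult summable_sums summable_comparison_test[OF _ costs])
      auto
  ultimately have "(\<Sum>n<N. cmod (weighted w c n - (\<Sum>k<K. dconv (trunc M (A k)) (trunc M (B k)) n)))
      \<le> suminf \<beta>"
    by (intro sum_norm_suminf_le sums_summable)
  moreover have "(\<Sum>k<K. 2 * sqrt W2 * sqrt T2 * cost a b k) \<le> 2 * sqrt W2 * sqrt T2 * (\<Sum>k. cost a b k)"
    unfolding sum_distrib_left[symmetric] using W2_nonneg T2_nonneg
    by (intro mult_left_mono sum_le_suminf[OF costs]) (auto intro: cost_nonneg)
  ultimately show ?thesis using \<beta>_sums by (simp add: sums_iff A_def B_def)
qed

lemma Xnorm_weighted_le:
  assumes rep: "Y_rep c a b" and c: "fin_supp c"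
    and w_mult: "\<And>i j. w (i * j) = w i * w j" and w_nonneg: "\<And>i. 0 \<le> w i"
    and w_le_1: "\<And>i. w i \<le> 1" and w_summable: "summable (\<lambda>i. (w i)\<^sup>2)"
  shows "Xnorm (weighted w c) \<le> (\<Sum>k. cost a b k)"
proof (rule field_le_epsilon)
  fix e :: real assume e: "e > 0"
  define C where "C = (\<Sum>k. cost a b k)"
  define W2 where "W2 = (\<Sum>i. (w i)\<^sup>2)"
  define T2 where "T2 = (\<lambda>M. \<Sum>i. if i < M then 0 else (w i)\<^sup>2)"
  have l2: "\<And>k. in_l2 (a k) \<and> in_l2 (b k)" and costs: "summable (cost a b)"
    using rep by (auto simp: Y_rep_def)
  have "(\<lambda>K. W2 * (\<Sum>k. if k < K then 0 else cost a b k)) \<longlonglongrightarrow> W2 * 0"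
    by (intro tendsto_intros suminf_tail_tendsto_0 costs)
  hence "eventually (\<lambda>K. W2 * (\<Sum>k. if k < K then 0 else cost a b k) < e/2) sequentially"
    using e by (intro order_tendstoD(2)) auto
  then obtain K where K: "W2 * (\<Sum>k. if k < K then 0 else cost a b k) < e/2"
    unfolding eventually_sequentially by blast
  have "(\<lambda>M. 2 * sqrt W2 * sqrt (T2 M) * C) \<longlonglongrightarrow> 2 * sqrt W2 * sqrt 0 * C"
    unfolding T2_def by (intro tendsto_intros suminf_tail_tendsto_0 w_summable)
  hence "eventually (\<lambda>M. 2 * sqrt W2 * sqrt (T2 M) * C < e/2) sequentially"
    using e by (intro order_tendstoD(2)) auto
  then obtain M where M: "2 * sqrt W2 * sqrt (T2 M) * C < e/2"
    unfolding eventually_sequentially by blast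
  have weighted_l2: "in_l2 (weighted w (a k))" "in_l2 (weighted w (b k))" for k
    using l2 in_l2_weighted[OF _ w_nonneg w_le_1] by auto
  define F where "F = (\<lambda>n. \<Sum>k<K. dconv (trunc M (weighted w (a k))) (trunc M (weighted w (b k))) n)"
  have F_rep: "X_rep F K (\<lambda>k. trunc M (weighted w (a k))) (\<lambda>k. trunc M (weighted w (b k)))"
    unfolding X_rep_def F_def using weighted_l2 by (auto intro: fin_supp_trunc)
  hence F: "F \<in> Xspace" by (auto simp: Xspace_def)
  have "Xnorm F \<le> (\<Sum>k<K. cost (\<lambda>k. trunc M (weighted w (a k))) (\<lambda>k. trunc M (weighted w (b k))) k)"
    by (rule Xnorm_le_X_rep[OF F_rep])
  also have "\<dots> \<le> (\<Sum>k<K. cost a b k)"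
    using l2 w_nonneg w_le_1 weighted_l2 l2norm_nonneg[OF in_l2_trunc[OF weighted_l2(2)]]
    by (intro sum_mono mult_mono order.trans[OF l2norm_trunc_le] l2norm_weighted_le)
      (auto intro: l2norm_nonneg)
  also have "\<dots> \<le> C"
    unfolding C_def by (rule sum_le_suminf[OF costs]) (use Y_rep_cost_nonneg[OF rep] in auto)
  finally have XF: "Xnorm F \<le> C" .
  define R where "R = (\<lambda>n. weighted w c n - F n)"
  have R: "R \<in> Xspace"
    unfolding R_def using F c by (intro Xspace_diff) (auto simp: Xspace_iff_fin_supp fin_supp_weighted)
  obtain L where L: "\<And>n. L \<le> n \<Longrightarrow> c n = 0" using c by (auto simp: fin_supp_iff_eventually_0)
  have "Xnorm R \<le> (\<Sum>n<max L (M * M). cmod (R n))"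
  proof (rule Xnorm_le_sum_norm)
    show "R 0 = 0" using c by (simp add: R_def F_def weighted_def dconv_def fin_supp_def)
    fix n assume "max L (M * M) \<le> n"
    moreover have "dconv (trunc M (weighted w (a k))) (trunc M (weighted w (b k))) n = 0"
      if "M * M \<le> n" for k
      using that by (intro dconv_eq_0_beyond) (auto simp: trunc_def)
    ultimately show "R n = 0" using L by (simp add: R_def F_def weighted_def)
  qed
  also have "\<dots> < e"
    using sum_norm_weighted_minus_truncated_le[OF rep w_mult w_nonneg w_le_1 w_summable,
        where N="max L (M * M)" and K=K and M=M] K M
    by (simp add: R_def F_def C_def W2_def T2_def)
  finally have "Xnorm R < e" .
  have "weighted w c = (\<lambda>n. R n + F n)" by (simp add: R_def fun_eq_iff)
  hence "Xnorm (weighted w c) \<le> Xnorm R + Xnorm F" using Xnorm_add_le[OF R F] by simp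
  thus "Xnorm (weighted w c) \<le> (\<Sum>k. cost a b k) + e" using \<open>Xnorm R < e\<close> XF by (simp add: C_def)
qed

text \<open>As \<open>r \<rightarrow> 1\<^sup>-\<close> the weight \<open>r\<^bsup>\<Omega>(n)\<^esup>\<close> on \<open>L\<close>-smooth numbers tends to \<open>1\<close> on the
  support of \<open>c\<close>, while for each fixed \<open>r < 1\<close> it is square summable.\<close>

lemma multiplicative_weight_close_to_1:
  assumes c: "fin_supp c" and e: "e > 0"
  obtains w where "\<And>i j. w (i * j) = w i * w j" "\<And>i. 0 \<le> w i" "\<And>i. w i \<le> 1"
    "summable (\<lambda>i. (w i)\<^sup>2)" "Xnorm (\<lambda>n. c n - weighted w c n) < e"
proof -
  obtain L where L: "\<And>n. L \<le> n \<Longrightarrow> c n = 0" and c0: "c 0 = 0"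
    using c by (auto simp: fin_supp_iff_eventually_0)
  define \<psi> where "\<psi> = (\<lambda>r::real. \<Sum>n<L. cmod (c n) * (1 - r ^ size (prime_factorization n)))"
  have "(\<psi> \<longlongrightarrow> \<psi> 1) (at_left 1)" unfolding \<psi>_def by (intro tendsto_intros)
  moreover have "\<psi> 1 = 0" by (simp add: \<psi>_def)
  ultimately have "eventually (\<lambda>r. \<psi> r < e) (at_left 1)" using e by (simp add: order_tendstoD(2))
  moreover have "eventually (\<lambda>r. r \<in> {0<..<1}) (at_left (1::real))"
    by (rule eventually_at_left_real) simp
  ultimately have "eventually (\<lambda>r. \<psi> r < e \<and> r \<in> {0<..<1}) (at_left 1)"
    by (rule eventually_conj)
  then obtain r where r: "\<psi> r < e" "0 < r" "r < 1"
    using eventually_happens[of _ "at_left (1::real)"] trivial_limit_at_left_real by auto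
  define w where "w = smooth_weight L r"
  have w_le_1: "w i \<le> 1" for i using r by (simp add: w_def smooth_weight_le_1)
  have "Xnorm (\<lambda>n. c n - weighted w c n) \<le> (\<Sum>n<L. cmod (c n - weighted w c n))"
    using L c0 by (intro Xnorm_le_sum_norm) (auto simp: weighted_def)
  also have "\<dots> = \<psi> r" unfolding \<psi>_def
  proof (rule sum.cong)
    fix n assume n: "n \<in> {..<L}"
    show "cmod (c n - weighted w c n) = cmod (c n) * (1 - r ^ size (prime_factorization n))"
    proof (cases "n = 0")
      case False
      hence w_n: "w n = r ^ size (prime_factorization n)" using n by (simp add: w_def smooth_weight_small)
      have "cmod (c n - weighted w c n) = cmod (of_real (1 - w n) * c n)"
        by (simp add: weighted_def algebra_simps)
      also have "\<dots> = (1 - w n) * cmod (c n)"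
        using w_le_1[of n] by (simp only: norm_mult norm_of_real abs_of_nonneg diff_ge_0_iff_ge)
      finally show ?thesis by (simp add: w_n mult.commute)
    qed (simp add: c0 weighted_def)
  qed simp
  finally have "Xnorm (\<lambda>n. c n - weighted w c n) < e" using r by simp
  moreover have "summable (\<lambda>i. (w i)\<^sup>2)"
    unfolding w_def using r by (intro summable_smooth_weight_squared) auto
  ultimately show ?thesis using r w_le_1
    by (intro that[of w]) (simp_all add: w_def smooth_weight_mult smooth_weight_nonneg)
qed

theorem Xnorm_eq_Ynorm:
  assumes c: "c \<in> Xspace" shows "Xnorm c = Ynorm c"
proof (rule antisym)
  have "Xnorm c \<le> (\<Sum>k. cost a b k)" if rep: "Y_rep c a b" for a b
  proof (rule field_le_epsilon)
    fix e :: real assume "e > 0"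
    have supp: "fin_supp c" using c by (simp add: Xspace_iff_fin_supp)
    obtain w where w: "\<And>i j. w (i * j) = w i * w j" "\<And>i. 0 \<le> w i" "\<And>i. w i \<le> 1"
      "summable (\<lambda>i. (w i)\<^sup>2)" and close: "Xnorm (\<lambda>n. c n - weighted w c n) < e"
      by (rule multiplicative_weight_close_to_1[OF supp \<open>e > 0\<close>]) blast
    have wc: "weighted w c \<in> Xspace" using supp by (simp add: Xspace_iff_fin_supp fin_supp_weighted)
    have "c = (\<lambda>n. (c n - weighted w c n) + weighted w c n)" by simp
    hence "Xnorm c \<le> Xnorm (\<lambda>n. c n - weighted w c n) + Xnorm (weighted w c)"
      using Xnorm_add_le[OF Xspace_diff[OF c wc] wc] by simp
    thus "Xnorm c \<le> (\<Sum>k. cost a b k) + e"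
      using close Xnorm_weighted_le[OF rep supp w] by simp
  qed
  thus "Xnorm c \<le> Ynorm c" using Xspace_imp_Yspace[OF c] by (rule Ynorm_greatest[rotated])
qed (rule Ynorm_le_Xnorm[OF c])

section \<open>Extension to the completion\<close>

lemma Yspace_limit:
  assumes t: "\<And>m. t m \<in> Yspace"
    and steps: "\<And>m. Ynorm (\<lambda>n. t (Suc m) n - t m n) \<le> C * (1/2) ^ m"
    and lim: "\<And>n. (\<lambda>m. t m n) \<longlonglongrightarrow> v n"
  shows "v \<in> Yspace" and "Ynorm (\<lambda>n. v n - t M n) \<le> 2 * C * (1/2) ^ M"
proof -
  define d where "d = (\<lambda>m n. t (Suc (m + M)) n - t (m + M) n)"
  have d: "d m \<in> Yspace" for m unfolding d_def by (intro Yspace_diff t)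
  have d_le: "Ynorm (d m) \<le> C * (1/2) ^ M * (1/2) ^ m" for m
    using steps[of "m + M"] by (simp add: d_def power_add mult_ac)
  have geom: "(\<lambda>m. C * (1/2) ^ M * (1/2::real) ^ m) sums (C * (1/2) ^ M * 2)"
    using sums_mult[OF geometric_sums[of "1/2::real"], of "C * (1/2) ^ M"] by simp
  have summable: "summable (\<lambda>m. Ynorm (d m))"
    by (rule summable_comparison_test[OF _ sums_summable[OF geom]]) (use d_le d Ynorm_nonneg in auto)
  have "(\<lambda>n. \<Sum>m. d m n) = (\<lambda>n. v n - t M n)"
  proof
    fix n
    have "(\<lambda>m. t (m + M) n) \<longlonglongrightarrow> v n" using LIMSEQ_ignore_initial_segment[OF lim] .
    from telescope_sums[OF this] show "(\<Sum>m. d m n) = v n - t M n"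
      by (simp add: d_def sums_iff)
  qed
  moreover have "(\<Sum>m. Ynorm (d m)) \<le> C * (1/2) ^ M * 2"
    using suminf_le[OF d_le summable sums_summable[OF geom]] geom by (simp add: sums_iff)
  ultimately have diff: "(\<lambda>n. v n - t M n) \<in> Yspace" "Ynorm (\<lambda>n. v n - t M n) \<le> 2 * C * (1/2) ^ M"
    using Yspace_suminf[OF d summable] by auto
  thus "Ynorm (\<lambda>n. v n - t M n) \<le> 2 * C * (1/2) ^ M" by simp
  have "(\<lambda>n. (v n - t M n) + t M n) \<in> Yspace" by (rule Yspace_add[OF diff(1) t])
  thus "v \<in> Yspace" by simp
qed

lemma Cauchy_if_dist_le:
  fixes f :: "nat \<Rightarrow> 'a::real_normed_vector"
  assumes "\<And>m m'. norm (f m - f m') \<le> g m + g m'" "g \<longlonglongrightarrow> 0"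
  shows "Cauchy f"
proof (rule CauchyI)
  fix e :: real assume "0 < e"
  then obtain M where M: "\<And>m. M \<le> m \<Longrightarrow> g m < e/2"
    using order_tendstoD(2)[OF assms(2), of "e/2"] by (auto simp: eventually_sequentially)
  show "\<exists>M. \<forall>m\<ge>M. \<forall>n\<ge>M. norm (f m - f n) < e"
    using assms(1) M by (intro exI[of _ M]) (smt (verit, best) field_sum_of_halves)
qed

locale Xspace_completion =
  fixes j :: "(nat \<Rightarrow> complex) \<Rightarrow> 'b::banach"
  assumes j_add: "\<forall>c\<in>Xspace. \<forall>d\<in>Xspace. j (\<lambda>n. c n + d n) = j c + j d"
    and j_scale: "\<forall>c\<in>Xspace. \<forall>r::real. j (\<lambda>n. of_real r * c n) = r *\<^sub>R j c"
    and j_isom: "\<forall>c\<in>Xspace. norm (j c) = Xnorm c"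
    and j_dense: "closure (j ` Xspace) = UNIV"
begin

lemma j_diff: "c \<in> Xspace \<Longrightarrow> d \<in> Xspace \<Longrightarrow> j (\<lambda>n. c n - d n) = j c - j d"
  using j_add[rule_format, of c "\<lambda>n. of_real (-1) * d n"] j_scale[rule_format, of d "-1"]
    Xspace_scale[of d "-1"] by simp

lemma norm_j_diff: "c \<in> Xspace \<Longrightarrow> d \<in> Xspace \<Longrightarrow> norm (j c - j d) = Ynorm (\<lambda>n. c n - d n)"
  using j_isom Xspace_diff Xnorm_eq_Ynorm by (simp add: j_diff[symmetric])

lemma norm_diff_le_norm_j_diff:
  assumes "c \<in> Xspace" "d \<in> Xspace" shows "cmod (c n - d n) \<le> norm (j c - j d)"
  using norm_le_Ynorm[OF Xspace_imp_Yspace[OF Xspace_diff[OF assms]]] by (simp add: norm_j_diff[OF assms])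

definition approx :: "'b \<Rightarrow> nat \<Rightarrow> nat \<Rightarrow> complex" where
  "approx x = (SOME t. \<forall>m. t m \<in> Xspace \<and> norm (j (t m) - x) < (1/2) ^ m)"

lemma approx: "approx x m \<in> Xspace" "norm (j (approx x m) - x) < (1/2) ^ m"
proof -
  have "\<forall>e>0. \<exists>c\<in>Xspace. norm (j c - x) < e"
    using j_dense closure_approachable[of x "j ` Xspace"] by (simp add: dist_norm)
  hence "\<forall>m. \<exists>c. c \<in> Xspace \<and> norm (j c - x) < (1/2) ^ m"
    by (metis zero_less_divide_1_iff zero_less_numeral zero_less_power)
  from someI_ex[OF choice[OF this]] show "approx x m \<in> Xspace" "norm (j (approx x m) - x) < (1/2) ^ m"
    unfolding approx_def by blast+
qed

lemma j_approx_tendsto: "(\<lambda>m. j (approx x m)) \<longlonglongrightarrow> x"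
proof -
  have "(\<lambda>m. j (approx x m) - x) \<longlonglongrightarrow> 0"
    by (rule Lim_null_comparison[of _ "\<lambda>m. (1/2::real) ^ m"])
      (use approx(2) in \<open>auto intro: always_eventually less_imp_le LIMSEQ_power_zero\<close>)
  thus ?thesis by (rule LIM_zero_cancel)
qed

definition V :: "'b \<Rightarrow> nat \<Rightarrow> complex" where
  "V x = (\<lambda>n. lim (\<lambda>m. approx x m n))"

lemma approx_tendsto_V: "(\<lambda>m. approx x m n) \<longlonglongrightarrow> V x n"
proof -
  have "Cauchy (\<lambda>m. j (approx x m))" by (rule LIMSEQ_imp_Cauchy[OF j_approx_tendsto])
  hence "Cauchy (\<lambda>m. approx x m n)"
    unfolding Cauchy_def dist_norm using norm_diff_le_norm_j_diff[OF approx(1) approx(1)]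
    by (meson le_less_trans)
  thus ?thesis by (simp add: V_def Cauchy_convergent_iff convergent_LIMSEQ_iff)
qed

lemma tendsto_V:
  assumes "\<And>m. s m \<in> Xspace" "(\<lambda>m. j (s m)) \<longlonglongrightarrow> x"
  shows "(\<lambda>m. s m n) \<longlonglongrightarrow> V x n"
proof -
  have dist_tendsto: "(\<lambda>m. norm (j (s m) - j (approx x m))) \<longlonglongrightarrow> 0"
    using tendsto_norm[OF tendsto_diff[OF assms(2) j_approx_tendsto[of x]]] by simp
  have dist_le: "\<forall>m. norm (s m n - approx x m n) \<le> norm (j (s m) - j (approx x m))"
  proof
    fix m show "norm (s m n - approx x m n) \<le> norm (j (s m) - j (approx x m))"
      by (rule norm_diff_le_norm_j_diff[OF assms(1) approx(1)])
  qed
  have "(\<lambda>m. s m n - approx x m n) \<longlonglongrightarrow> 0"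
    by (rule Lim_null_comparison[OF always_eventually[OF dist_le] dist_tendsto])
  hence "(\<lambda>m. approx x m n + (s m n - approx x m n)) \<longlonglongrightarrow> V x n + 0"
    by (rule tendsto_add[OF approx_tendsto_V])
  thus ?thesis by simp
qed

lemma V_add: "V (x + y) = (\<lambda>n. V x n + V y n)"
proof
  fix n
  let ?s = "\<lambda>m n. approx x m n + approx y m n"
  have "(\<lambda>m. j (?s m)) = (\<lambda>m. j (approx x m) + j (approx y m))"
    using j_add approx(1) by simp
  hence "(\<lambda>m. j (?s m)) \<longlonglongrightarrow> x + y" by (simp add: tendsto_add j_approx_tendsto)
  hence "(\<lambda>m. ?s m n) \<longlonglongrightarrow> V (x + y) n" by (intro tendsto_V Xspace_add approx)
  moreover have "(\<lambda>m. ?s m n) \<longlonglongrightarrow> V x n + V y n" by (intro tendsto_add approx_tendsto_V)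
  ultimately show "V (x + y) n = V x n + V y n" by (rule LIMSEQ_unique)
qed

lemma V_scale: "V (r *\<^sub>R x) = (\<lambda>n. of_real r * V x n)"
proof
  fix n
  let ?s = "\<lambda>m n. of_real r * approx x m n"
  have "(\<lambda>m. j (?s m)) = (\<lambda>m. r *\<^sub>R j (approx x m))"
    using j_scale approx(1) by simp
  hence "(\<lambda>m. j (?s m)) \<longlonglongrightarrow> r *\<^sub>R x" by (simp add: tendsto_scaleR j_approx_tendsto)
  hence "(\<lambda>m. ?s m n) \<longlonglongrightarrow> V (r *\<^sub>R x) n" by (intro tendsto_V Xspace_scale approx)
  moreover have "(\<lambda>m. ?s m n) \<longlonglongrightarrow> of_real r * V x n" by (intro tendsto_intros approx_tendsto_V)
  ultimately show "V (r *\<^sub>R x) n = of_real r * V x n" by (rule LIMSEQ_unique)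
qed

lemma V_j: "c \<in> Xspace \<Longrightarrow> V (j c) = c"
  using tendsto_V[of "\<lambda>_. c" "j c"] LIMSEQ_unique[OF _ tendsto_const] by (auto simp: fun_eq_iff)

lemma
  shows V_in_Yspace: "V x \<in> Yspace"
    and Ynorm_V: "Ynorm (V x) = norm x"
proof -
  let ?t = "approx x"
  have t: "?t m \<in> Yspace" for m using approx(1) by (rule Xspace_imp_Yspace)
  have "Ynorm (\<lambda>n. ?t (Suc m) n - ?t m n) \<le> 2 * (1/2) ^ m" for m
  proof -
    have "Ynorm (\<lambda>n. ?t (Suc m) n - ?t m n) = norm ((j (?t (Suc m)) - x) - (j (?t m) - x))"
      using norm_j_diff[OF approx(1) approx(1)] by simp
    also have "\<dots> \<le> (1/2) ^ Suc m + (1/2) ^ m"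
      using norm_triangle_ineq4 approx(2)[of x "Suc m"] approx(2)[of x m] by (smt (verit))
    also have "\<dots> \<le> 2 * (1/2) ^ m" by simp
    finally show ?thesis .
  qed
  note limit = Yspace_limit[OF t this approx_tendsto_V]
  show "V x \<in> Yspace" by (rule limit(1))
  have "(\<lambda>M. Ynorm (?t M) - Ynorm (V x)) \<longlonglongrightarrow> 0"
  proof (rule Lim_null_comparison[OF always_eventually])
    show "\<forall>M. norm (Ynorm (?t M) - Ynorm (V x)) \<le> 2 * 2 * (1/2) ^ M"
    proof
      fix M
      show "norm (Ynorm (?t M) - Ynorm (V x)) \<le> 2 * 2 * (1/2) ^ M"
        using Ynorm_diff_ge[OF limit(1) t, of M] limit(2)[of M] by (simp add: abs_minus_commute)
    qed
  qed (intro tendsto_mult_right_zero LIMSEQ_power_zero, simp)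
  hence "(\<lambda>M. Ynorm (?t M)) \<longlonglongrightarrow> Ynorm (V x)" by (rule LIM_zero_cancel)
  moreover have "(\<lambda>M. Ynorm (?t M)) = (\<lambda>M. norm (j (?t M)))"
    using j_isom approx(1) Xnorm_eq_Ynorm by simp
  hence "(\<lambda>M. Ynorm (?t M)) \<longlonglongrightarrow> norm x" by (simp add: tendsto_norm j_approx_tendsto)
  ultimately show "Ynorm (V x) = norm x" by (rule LIMSEQ_unique)
qed

lemma inj_V: "inj V"
proof (rule injI)
  fix x y assume "V x = V y"
  hence "V (x + (-1) *\<^sub>R y) = (\<lambda>_. 0)" by (simp only: V_add V_scale) simp
  hence "norm (x + (-1) *\<^sub>R y) = 0" using Ynorm_V[of "x + (-1) *\<^sub>R y"] Ynorm_zero by simp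
  thus "x = y" by simp
qed

lemma V_surj: assumes y: "y \<in> Yspace" shows "y \<in> range V"
proof -
  have "\<forall>m. \<exists>c. c \<in> Xspace \<and> Ynorm (\<lambda>n. y n - c n) < (1/2) ^ m"
    using Xspace_dense_in_Yspace[OF y] by (metis zero_less_divide_1_iff zero_less_numeral zero_less_power)
  then obtain c where c: "\<And>m. c m \<in> Xspace" "\<And>m. Ynorm (\<lambda>n. y n - c m n) < (1/2) ^ m"
    using choice[of "\<lambda>m c. c \<in> Xspace \<and> Ynorm (\<lambda>n. y n - c n) < (1/2) ^ m"] by blast
  have cY: "c m \<in> Yspace" for m by (rule Xspace_imp_Yspace[OF c(1)])
  have "Cauchy (\<lambda>m. j (c m))"
  proof (rule Cauchy_if_dist_le[of _ "\<lambda>m. (1/2) ^ m"])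
    fix m m'
    have "norm (j (c m) - j (c m')) = Ynorm (\<lambda>n. c m n - c m' n)"
      by (rule norm_j_diff[OF c(1) c(1)])
    also have "\<dots> \<le> Ynorm (\<lambda>n. c m n - y n) + Ynorm (\<lambda>n. y n - c m' n)"
      by (rule Ynorm_triangle[OF cY y cY])
    finally show "norm (j (c m) - j (c m')) \<le> (1/2) ^ m + (1/2) ^ m'"
      using c(2)[of m] c(2)[of m'] Ynorm_minus_commute[OF cY y] by simp
  qed (rule LIMSEQ_power_zero, simp)
  then obtain x where "(\<lambda>m. j (c m)) \<longlonglongrightarrow> x" by (auto simp: Cauchy_convergent_iff convergent_def)
  have "V x = y"
  proof
    fix n
    have "(\<lambda>m. c m n - y n) \<longlonglongrightarrow> 0"
    proof (rule Lim_null_comparison[OF always_eventually])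
      show "\<forall>m. norm (c m n - y n) \<le> (1/2) ^ m"
      proof
        fix m
        have "norm (c m n - y n) \<le> Ynorm (\<lambda>n. c m n - y n)"
          by (rule norm_le_Ynorm[OF Yspace_diff[OF cY y]])
        thus "norm (c m n - y n) \<le> (1/2) ^ m"
          using c(2)[of m] Ynorm_minus_commute[OF cY y] by simp
      qed
    qed (rule LIMSEQ_power_zero, simp)
    hence "(\<lambda>m. c m n) \<longlonglongrightarrow> y n" by (simp add: LIM_zero_iff)
    moreover have "(\<lambda>m. c m n) \<longlonglongrightarrow> V x n" by (rule tendsto_V[OF c(1)]) fact
    ultimately show "V x n = y n" by (rule LIMSEQ_unique[rotated])
  qed
  thus ?thesis by blast
qed

lemma bij_betw_V: "bij_betw V UNIV Yspace"
  unfolding bij_betw_def using inj_V V_in_Yspace V_surj by blast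

end

theorem proposition9:
  fixes j :: "(nat \<Rightarrow> complex) \<Rightarrow> 'b::banach"
  assumes j_add: "\<forall>c\<in>Xspace. \<forall>d\<in>Xspace. j (\<lambda>n. c n + d n) = j c + j d"
    and j_scale: "\<forall>c\<in>Xspace. \<forall>r::real. j (\<lambda>n. of_real r * c n) = r *\<^sub>R j c"
    and j_isom: "\<forall>c\<in>Xspace. norm (j c) = Xnorm c"
    and j_dense: "closure (j ` Xspace) = UNIV"
  shows "\<exists>V :: 'b \<Rightarrow> (nat \<Rightarrow> complex).
           (\<forall>x y. V (x + y) = (\<lambda>n. V x n + V y n))
         \<and> (\<forall>r x. V (r *\<^sub>R x) = (\<lambda>n. of_real r * V x n))
         \<and> bij_betw V UNIV Yspace
         \<and> (\<forall>x. Ynorm (V x) = norm x)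
         \<and> (\<forall>c\<in>Xspace. V (j c) = c)"
proof -
  interpret Xspace_completion j by unfold_locales (fact assms)+
  show ?thesis
    using V_add V_scale bij_betw_V Ynorm_V V_j by blast
qed

end
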